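(* Let $d>1$ be an integer and $G=\langle a,b\mid aba^{-1}=b^d\rangle$. Let $S=\{(m,i): m,i\in\mathbb{N},\ m\geq1,\ \gcd(m,d)=1,\ 0\leq i<m\}$, with $(m_1,i_1)\sim(m_2,i_2)$ iff $m_1=m_2$ and $i_1\equiv i_2d^j\pmod{m_1}$ for some $j\in\mathbb{Z}$. Define the degree of the class $\overline{(m,i)}$ to be $m\cdot\mathrm{ord}_i(d)$, where $\mathrm{ord}_i(d)$ is the order of $d$ in $(\mathbb{Z}/m')^{\times}$ with $m'=m/\gcd(m,i)$. Then for every $n\geq1$ the number of conjugacy classes of subgroups of index $n$ in $G$ equals the number of classes $\overline{(m,i)}\in S/\sim$ whose degree divides $n$.
   Context: Here $\gcd(m,0)=m$, and $(\mathbb{Z}/1)^\times$ is the trivial group, so the order of $d$ in it is $1$. *)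

theory Defs
  imports "HOL-Algebra.Coset" "HOL-Number_Theory.Pocklington"
begin

datatype gen = GA | GB

type_synonym letter = "gen \<times> bool"   (* (generator, True = inverse letter) *)

inductive bs_eq :: "nat \<Rightarrow> letter list \<Rightarrow> letter list \<Rightarrow> bool" for d :: nat where
  bs_refl: "bs_eq d w w"
| bs_sym: "bs_eq d u v \<Longrightarrow> bs_eq d v u"
| bs_trans: "bs_eq d u v \<Longrightarrow> bs_eq d v w \<Longrightarrow> bs_eq d u w"
| bs_cancel: "bs_eq d (u @ [(g, s), (g, \<not> s)] @ v) (u @ v)"
| bs_rel: "bs_eq d (u @ [(GA, False), (GB, False), (GA, True)] @ v) (u @ replicate d (GB, False) @ v)"

definition BS :: "nat \<Rightarrow> letter list set monoid" where
  "BS d = \<lparr> carrier = {{v. bs_eq d w v} | w. True},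
            monoid.mult = (\<lambda>X Y. {v. \<exists>x\<in>X. \<exists>y\<in>Y. bs_eq d (x @ y) v}),
            one = {v. bs_eq d [] v} \<rparr>"

definition subgroups_of_index :: "('a, 'b) monoid_scheme \<Rightarrow> nat \<Rightarrow> 'a set set" where
  "subgroups_of_index G n = {H. subgroup H G \<and> finite (rcosets\<^bsub>G\<^esub> H) \<and> card (rcosets\<^bsub>G\<^esub> H) = n}"

definition subgroup_conj :: "('a, 'b) monoid_scheme \<Rightarrow> ('a set \<times> 'a set) set" where
  "subgroup_conj G = {(H, K). subgroup H G \<and> subgroup K G \<and>
      (\<exists>g\<in>carrier G. K = (g <#\<^bsub>G\<^esub> H) #>\<^bsub>G\<^esub> inv\<^bsub>G\<^esub> g)}"

definition num_conj_classes_index :: "('a, 'b) monoid_scheme \<Rightarrow> nat \<Rightarrow> nat" where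
  "num_conj_classes_index G n = card (subgroups_of_index G n // subgroup_conj G)"

definition S_set :: "nat \<Rightarrow> (nat \<times> nat) set" where
  "S_set d = {(m, i). m \<ge> 1 \<and> gcd m d = 1 \<and> i < m}"

text \<open>(m1,i1) ~ (m2,i2) iff m1 = m2 and i1 = i2 d^j mod m1 for some integer j;
  for negative j, d^j denotes the inverse of d^(-j) modulo m1 (d is a unit mod m1),
  so this is written as: i1 = i2 d^j or i2 = i1 d^j mod m1 for some natural j.\<close>

definition S_rel :: "nat \<Rightarrow> ((nat \<times> nat) \<times> (nat \<times> nat)) set" where
  "S_rel d = {((m1, i1), (m2, i2)). (m1, i1) \<in> S_set d \<and> (m2, i2) \<in> S_set d \<and> m1 = m2 \<and>
      (\<exists>j::nat. [i1 = i2 * d ^ j] (mod m1) \<or> [i2 = i1 * d ^ j] (mod m1))}"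

definition S_degree :: "nat \<Rightarrow> nat \<times> nat \<Rightarrow> nat" where
  "S_degree d p = (case p of (m, i) \<Rightarrow> m * Pocklington.ord (m div gcd m i) d)"

definition class_degree :: "nat \<Rightarrow> (nat \<times> nat) set \<Rightarrow> nat" where
  "class_degree d C = S_degree d (SOME p. p \<in> C)"

end

theory Submission
  imports Defs "HOL-Algebra.Generated_Groups"
begin

(* G = <a, b | a b a^-1 = b^d> is isomorphic to the group Aff of affine maps t -> d^l t + y of
   Z[1/d], via a -> (0, 1) and b -> (1, 0); normal forms a^-p b^q a^s make this map injective.
   A subgroup H of finite index projects onto k Z for some k >= 1 and meets the translations in
   m Z[1/d] with m coprime to d; hence H is generated by these translations and a single element
   (x, k), it has index k m, and it depends only on k, m and x mod m.  Conjugation acts on x by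
   x -> d^s x - (d^k - 1) z, so for k m = n the conjugacy classes correspond to the residues
   x mod g, g = gcd m (d^k - 1), up to multiplication by powers of d.  Writing i = (m / g) x turns
   them into the classes of S of degree dividing n: m / g divides i exactly when
   m * ord_{m / gcd(m, i)}(d) divides n. *)

section \<open>Conjugacy classes of subgroups of finite index\<close>

lemma card_image_eq_if_same_fibres:
  assumes fibres: "\<And>a a'. a \<in> A \<Longrightarrow> a' \<in> A \<Longrightarrow> g a = g a' \<longleftrightarrow> h a = h a'"
  shows "card (g ` A) = card (h ` A)"
proof -
  define t where "t y = h (inv_into A g y)" for y
  have t: "t (g a) = h a" if "a \<in> A" for a
  proof -
    have "inv_into A g (g a) \<in> A" "g (inv_into A g (g a)) = g a"
      using that by (auto intro: inv_into_into f_inv_into_f)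
    then show ?thesis
      unfolding t_def using fibres that by blast
  qed
  have "h ` A = t ` g ` A"
    using t by (force simp: image_image)
  moreover have "inj_on t (g ` A)"
  proof (rule inj_onI)
    fix y y' assume "y \<in> g ` A" "y' \<in> g ` A" "t y = t y'"
    then show "y = y'"
      using t fibres by (metis imageE)
  qed
  ultimately show ?thesis
    by (simp add: card_image)
qed

lemma card_quotient_eq:
  assumes r: "equiv X r" and s: "equiv Y s" and "A \<subseteq> X" and "B \<subseteq> Y"
    and into: "f ` A \<subseteq> B"
    and onto: "\<And>b. b \<in> B \<Longrightarrow> \<exists>a\<in>A. (f a, b) \<in> s"
    and rel: "\<And>a a'. a \<in> A \<Longrightarrow> a' \<in> A \<Longrightarrow> (a, a') \<in> r \<longleftrightarrow> (f a, f a') \<in> s"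
  shows "card (A // r) = card (B // s)"
proof -
  have "B // s = (\<lambda>a. s `` {f a}) ` A"
  proof
    show "B // s \<subseteq> (\<lambda>a. s `` {f a}) ` A"
    proof
      fix C assume "C \<in> B // s"
      then obtain b where "b \<in> B" "C = s `` {b}"
        by (rule quotientE)
      moreover obtain a where "a \<in> A" "(f a, b) \<in> s"
        using onto[OF \<open>b \<in> B\<close>] by blast
      ultimately show "C \<in> (\<lambda>a. s `` {f a}) ` A"
        using equiv_class_eq[OF s] by (metis image_eqI)
    qed
    show "(\<lambda>a. s `` {f a}) ` A \<subseteq> B // s"
      using into by (auto intro: quotientI)
  qed
  moreover have "card ((\<lambda>a. r `` {a}) ` A) = card ((\<lambda>a. s `` {f a}) ` A)"
  proof (rule card_image_eq_if_same_fibres)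
    fix a a' assume "a \<in> A" "a' \<in> A"
    moreover have "f a \<in> Y" "f a' \<in> Y"
      using calculation into \<open>B \<subseteq> Y\<close> by auto
    ultimately show "r `` {a} = r `` {a'} \<longleftrightarrow> s `` {f a} = s `` {f a'}"
      using rel[of a a'] eq_equiv_class_iff[OF r, of a a'] eq_equiv_class_iff[OF s, of "f a" "f a'"]
        \<open>A \<subseteq> X\<close> by blast
  qed
  moreover have "A // r = (\<lambda>a. r `` {a}) ` A"
    unfolding quotient_def by blast
  ultimately show ?thesis
    by simp
qed

context group
begin

lemma conj_coset_eq_image:
  assumes "H \<subseteq> carrier G" and "g \<in> carrier G"
  shows "(g <# H) #> inv g = (\<lambda>h. g \<otimes> h \<otimes> inv g) ` H"
  unfolding l_coset_def r_coset_def by auto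

lemma conj_image_comp:
  assumes "H \<subseteq> carrier G" and "g \<in> carrier G" and "g' \<in> carrier G"
  shows "(\<lambda>h. g' \<otimes> h \<otimes> inv g') ` (\<lambda>h. g \<otimes> h \<otimes> inv g) ` H
       = (\<lambda>h. (g' \<otimes> g) \<otimes> h \<otimes> inv (g' \<otimes> g)) ` H"
  unfolding image_image using assms
  by (intro image_cong) (auto simp: inv_mult_group m_assoc)

lemma conj_image_one:
  assumes "H \<subseteq> carrier G"
  shows "(\<lambda>h. \<one> \<otimes> h \<otimes> inv \<one>) ` H = H"
proof -
  have "(\<lambda>h. \<one> \<otimes> h \<otimes> inv \<one>) ` H = (\<lambda>h. h) ` H"
    using assms by (intro image_cong) auto
  then show ?thesis
    by simp
qed

lemma conj_image_eqI:
  assumes "H \<subseteq> carrier G" and "K \<subseteq> carrier G" and g: "g \<in> carrier G"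
    and "(\<lambda>h. g \<otimes> h \<otimes> inv g) ` H \<subseteq> K"
    and "(\<lambda>h. inv g \<otimes> h \<otimes> inv (inv g)) ` K \<subseteq> H"
  shows "(\<lambda>h. g \<otimes> h \<otimes> inv g) ` H = K"
proof
  have "K = (\<lambda>h. g \<otimes> h \<otimes> inv g) ` (\<lambda>h. inv g \<otimes> h \<otimes> inv (inv g)) ` K"
    using conj_image_comp[of K "inv g" g] conj_image_one assms(2) g by simp
  then show "K \<subseteq> (\<lambda>h. g \<otimes> h \<otimes> inv g) ` H"
    using assms(5) by blast
qed (rule assms(4))

lemma subgroup_conj_iff:
  "(H, K) \<in> subgroup_conj G \<longleftrightarrow> subgroup H G \<and> subgroup K G \<and>
     (\<exists>g\<in>carrier G. K = (\<lambda>h. g \<otimes> h \<otimes> inv g) ` H)"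
  unfolding subgroup_conj_def using conj_coset_eq_image[OF subgroup.subset] by blast

lemma subgroup_conj_equiv: "equiv {H. subgroup H G} (subgroup_conj G)"
proof (rule equivI)
  show "refl_on {H. subgroup H G} (subgroup_conj G)"
  proof (rule refl_onI)
    fix H assume "H \<in> {H. subgroup H G}"
    then have "subgroup H G" and "H = (\<lambda>h. \<one> \<otimes> h \<otimes> inv \<one>) ` H"
      using conj_image_one[OF subgroup.subset] by auto
    then show "(H, H) \<in> subgroup_conj G"
      unfolding subgroup_conj_iff by blast
  qed
  show "sym (subgroup_conj G)"
  proof (rule symI)
    fix H K assume "(H, K) \<in> subgroup_conj G"
    then obtain g where "subgroup H G" "subgroup K G" "g \<in> carrier G"
      and K: "K = (\<lambda>h. g \<otimes> h \<otimes> inv g) ` H"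
      by (auto simp: subgroup_conj_iff)
    moreover have "(\<lambda>h. inv g \<otimes> h \<otimes> inv (inv g)) ` K = H"
      using calculation conj_image_comp[of H g "inv g"] conj_image_one
        subgroup.subset[OF \<open>subgroup H G\<close>] by simp
    ultimately show "(K, H) \<in> subgroup_conj G"
      unfolding subgroup_conj_iff by (metis inv_closed)
  qed
  show "trans (subgroup_conj G)"
  proof (rule transI)
    fix H K L assume "(H, K) \<in> subgroup_conj G" "(K, L) \<in> subgroup_conj G"
    then obtain g g' where "subgroup H G" "subgroup L G" "g \<in> carrier G" "g' \<in> carrier G"
      and "K = (\<lambda>h. g \<otimes> h \<otimes> inv g) ` H" "L = (\<lambda>h. g' \<otimes> h \<otimes> inv g') ` K"
      by (auto simp: subgroup_conj_iff)
    moreover have "L = (\<lambda>h. (g' \<otimes> g) \<otimes> h \<otimes> inv (g' \<otimes> g)) ` H"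
      using calculation conj_image_comp[of H g g'] subgroup.subset[OF \<open>subgroup H G\<close>] by simp
    ultimately show "(H, L) \<in> subgroup_conj G"
      unfolding subgroup_conj_iff by (metis m_closed)
  qed
qed (auto simp: subgroup_conj_def)

lemma rcos_eq_iff:
  assumes "subgroup H G" and "x \<in> carrier G" and "y \<in> carrier G"
  shows "H #> x = H #> y \<longleftrightarrow> x \<otimes> inv y \<in> H"
proof
  assume "H #> x = H #> y"
  then show "x \<otimes> inv y \<in> H"
    using rcos_self[OF assms(2,1)] subgroup.rcos_module_imp[OF assms(1) is_group assms(3)] by simp
next
  assume "x \<otimes> inv y \<in> H"
  then show "H #> x = H #> y"
    using subgroup.rcos_module_rev[OF assms(1) is_group assms(3,2)] repr_independence assms
    by metis
qed

lemma pow_in_finite_index_subgroup: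
  assumes H: "subgroup H G" and fin: "finite (rcosets H)" and g: "g \<in> carrier G"
  shows "\<exists>j::nat. j \<ge> 1 \<and> g [^] j \<in> H"
proof -
  define f where "f j = H #> g [^] (j::nat)" for j
  have "range f \<subseteq> rcosets H"
    unfolding f_def using g subgroup.subset[OF H] by (auto intro!: rcosetsI)
  then have "\<not> inj f"
    using fin finite_subset finite_imageD infinite_UNIV_nat by blast
  then obtain i j where ij: "i < j" "f i = f j"
    unfolding inj_def by (metis linorder_neqE_nat)
  have "g [^] j \<in> H #> g [^] i"
    using ij(2) unfolding f_def by (metis H g nat_pow_closed rcos_self)
  then have "g [^] j \<otimes> inv (g [^] i) \<in> H"
    by (intro subgroup.rcos_module_imp[OF H is_group]) (use g in auto)
  moreover have "g [^] j = g [^] (j - i) \<otimes> g [^] i"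
    using ij(1) nat_pow_mult[OF g, of "j - i" i] by simp
  ultimately have "g [^] (j - i) \<in> H"
    using g by (simp add: m_assoc)
  then show ?thesis
    using ij(1) by (intro exI[of _ "j - i"]) simp
qed

lemma inv_cancel_left [simp]:
  "x \<in> carrier G \<Longrightarrow> y \<in> carrier G \<Longrightarrow> inv x \<otimes> (x \<otimes> y) = y"
  and inv_cancel_left' [simp]: "x \<in> carrier G \<Longrightarrow> y \<in> carrier G \<Longrightarrow> x \<otimes> (inv x \<otimes> y) = y"
  by (simp_all add: m_assoc[symmetric])

lemma conj_int_pow:
  assumes g: "g \<in> carrier G" and x: "x \<in> carrier G"
  shows "g \<otimes> x [^] (q::int) \<otimes> inv g = (g \<otimes> x \<otimes> inv g) [^] q"
proof -
  have "(\<lambda>y. g \<otimes> y \<otimes> inv g) \<in> hom G G"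
    using g by (intro homI) (auto simp: m_assoc inv_solve_left)
  from hom_int_pow[OF this x is_group is_group] show ?thesis .
qed

end

context group_hom
begin

lemma image_conj:
  assumes "S \<subseteq> carrier G" and "g \<in> carrier G"
  shows "h ` (\<lambda>x. g \<otimes> x \<otimes> inv g) ` S = (\<lambda>y. h g \<otimes>\<^bsub>H\<^esub> y \<otimes>\<^bsub>H\<^esub> inv\<^bsub>H\<^esub> h g) ` h ` S"
  unfolding image_image using assms by (intro image_cong) auto

lemma image_rcosets:
  assumes "S \<subseteq> carrier G" and surj: "h ` carrier G = carrier H"
  shows "rcosets\<^bsub>H\<^esub> (h ` S) = (\<lambda>X. h ` X) ` (rcosets\<^bsub>G\<^esub> S)"
proof -
  have "h ` (S #> g) = h ` S #>\<^bsub>H\<^esub> h g" if g: "g \<in> carrier G" for g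
  proof -
    have "h ` (S #> g) = (\<lambda>s. h (s \<otimes> g)) ` S"
      unfolding r_coset_def by auto
    also have "\<dots> = (\<lambda>s. h s \<otimes>\<^bsub>H\<^esub> h g) ` S"
      using assms(1) g by (intro image_cong) auto
    finally show ?thesis
      unfolding r_coset_def by auto
  qed
  then have "rcosets\<^bsub>H\<^esub> (h ` S) = (\<Union>a\<in>carrier G. {h ` (S #> a)})"
    unfolding RCOSETS_def surj[symmetric] by auto
  then show ?thesis
    unfolding RCOSETS_def by auto
qed

lemma image_subgroups_of_index_iff:
  assumes inj: "inj_on h (carrier G)" and surj: "h ` carrier G = carrier H"
    and K: "subgroup K G"
  shows "h ` K \<in> subgroups_of_index H n \<longleftrightarrow> K \<in> subgroups_of_index G n"
proof -
  have "inj_on (\<lambda>X. h ` X) (rcosets\<^bsub>G\<^esub> K)"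
    using inj subgroup.rcosets_carrier[OF K G.is_group]
    by (intro inj_onI) (metis inj_on_image_eq_iff)
  then have "finite (rcosets\<^bsub>H\<^esub> (h ` K)) \<longleftrightarrow> finite (rcosets\<^bsub>G\<^esub> K)"
    and "card (rcosets\<^bsub>H\<^esub> (h ` K)) = card (rcosets\<^bsub>G\<^esub> K)"
    using image_rcosets[OF subgroup.subset[OF K] surj] finite_image_iff card_image by auto
  moreover have "subgroup (h ` K) H"
    using subgroup_img_is_subgroup[OF K] .
  ultimately show ?thesis
    unfolding subgroups_of_index_def using K by auto
qed

lemma image_subgroup_conj_iff:
  assumes inj: "inj_on h (carrier G)" and surj: "h ` carrier G = carrier H"
    and K: "subgroup K G" and K': "subgroup K' G"
  shows "(h ` K, h ` K') \<in> subgroup_conj H \<longleftrightarrow> (K, K') \<in> subgroup_conj G"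
proof
  assume "(h ` K, h ` K') \<in> subgroup_conj H"
  then obtain y where "y \<in> carrier H"
    and "h ` K' = (\<lambda>x. y \<otimes>\<^bsub>H\<^esub> x \<otimes>\<^bsub>H\<^esub> inv\<^bsub>H\<^esub> y) ` h ` K"
    unfolding H.subgroup_conj_iff by blast
  moreover obtain g where g: "g \<in> carrier G" and "y = h g"
    using \<open>y \<in> carrier H\<close> surj by blast
  ultimately have "h ` K' = (\<lambda>x. h g \<otimes>\<^bsub>H\<^esub> x \<otimes>\<^bsub>H\<^esub> inv\<^bsub>H\<^esub> h g) ` h ` K"
    by simp
  then have "h ` K' = h ` (\<lambda>x. g \<otimes> x \<otimes> inv g) ` K"
    using image_conj[OF subgroup.subset[OF K] g] by simp
  moreover have "(\<lambda>x. g \<otimes> x \<otimes> inv g) ` K \<subseteq> carrier G"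
    using g subgroup.mem_carrier[OF K] by (intro image_subsetI) simp
  ultimately have "K' = (\<lambda>x. g \<otimes> x \<otimes> inv g) ` K"
    by (simp add: inj_on_image_eq_iff[OF inj subgroup.subset[OF K']])
  then show "(K, K') \<in> subgroup_conj G"
    unfolding G.subgroup_conj_iff using K K' g by blast
next
  assume "(K, K') \<in> subgroup_conj G"
  then obtain g where g: "g \<in> carrier G" and "K' = (\<lambda>x. g \<otimes> x \<otimes> inv g) ` K"
    unfolding G.subgroup_conj_iff by blast
  then have "h ` K' = (\<lambda>y. h g \<otimes>\<^bsub>H\<^esub> y \<otimes>\<^bsub>H\<^esub> inv\<^bsub>H\<^esub> h g) ` h ` K"
    using image_conj[OF subgroup.subset[OF K] g] by simp
  moreover have "subgroup (h ` K) H" "subgroup (h ` K') H"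
    using subgroup_img_is_subgroup K K' by auto
  moreover have "h g \<in> carrier H"
    using g by simp
  ultimately show "(h ` K, h ` K') \<in> subgroup_conj H"
    unfolding H.subgroup_conj_iff by blast
qed

end

lemma num_conj_classes_index_iso:
  assumes G: "group G" and M: "group M" and iso: "h \<in> iso G M"
  shows "num_conj_classes_index G n = num_conj_classes_index M n"
proof -
  interpret group_hom G M h
    using G M iso by (simp add: group_hom_def group_hom_axioms_def iso_def)
  have inj: "inj_on h (carrier G)" and surj: "h ` carrier G = carrier M"
    using iso by (auto simp: iso_def bij_betw_def)
  let ?h' = "inv_into (carrier G) h"
  interpret inv: group_hom M G ?h'
    using G M G.iso_set_sym[OF iso] by (simp add: group_hom_def group_hom_axioms_def iso_def)
  show ?thesis
    unfolding num_conj_classes_index_def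
  proof (rule card_quotient_eq[OF G.subgroup_conj_equiv H.subgroup_conj_equiv])
    show "(\<lambda>K. h ` K) ` subgroups_of_index G n \<subseteq> subgroups_of_index M n"
      using image_subgroups_of_index_iff[OF inj surj] by (auto simp: subgroups_of_index_def)
  next
    fix K assume K: "K \<in> subgroups_of_index M n"
    then have "subgroup K M"
      by (simp add: subgroups_of_index_def)
    have sub: "subgroup (?h' ` K) G"
      using inv.subgroup_img_is_subgroup[OF \<open>subgroup K M\<close>] .
    have "h ` ?h' ` K = K"
      unfolding image_image using subgroup.subset[OF \<open>subgroup K M\<close>] surj
      by (simp add: f_inv_into_f subset_iff cong: image_cong)
    moreover have "(K, K) \<in> subgroup_conj M"
      using H.subgroup_conj_equiv \<open>subgroup K M\<close> by (simp add: equiv_def refl_on_def)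
    ultimately show "\<exists>K'\<in>subgroups_of_index G n. (h ` K', K) \<in> subgroup_conj M"
      using image_subgroups_of_index_iff[OF inj surj sub] K by metis
  next
    fix K K' assume "K \<in> subgroups_of_index G n" "K' \<in> subgroups_of_index G n"
    then show "(K, K') \<in> subgroup_conj G \<longleftrightarrow> (h ` K, h ` K') \<in> subgroup_conj M"
      using image_subgroup_conj_iff[OF inj surj] by (simp add: subgroups_of_index_def)
  qed (auto simp: subgroups_of_index_def)
qed

section \<open>Normal forms in groups with the relation \<open>a b a\<^sup>-\<^sup>1 = b\<^sup>k\<close>\<close>

locale bs_relation = group G for G (structure) +
  fixes a b :: 'a and k :: nat
  assumes a_closed [simp]: "a \<in> carrier G" and b_closed [simp]: "b \<in> carrier G"
    and relation: "a \<otimes> b \<otimes> inv a = b [^] k"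
begin

lemma conj_b_power: "a \<otimes> b [^] (e::int) \<otimes> inv a = b [^] (int k * e)"
  using conj_int_pow[of a b e] relation int_pow_pow[of b "int k" e] by (simp add: int_pow_int)

lemma conj_a_power_b_power: "a [^] (p::nat) \<otimes> b [^] (e::int) \<otimes> inv (a [^] p) = b [^] (int k ^ p * e)"
proof (induction p arbitrary: e)
  case (Suc p)
  have "a [^] Suc p \<otimes> x \<otimes> inv (a [^] Suc p) = a [^] p \<otimes> (a \<otimes> x \<otimes> inv a) \<otimes> inv (a [^] p)"
    if "x \<in> carrier G" for x
    using that by (simp add: nat_pow_Suc inv_mult_group m_assoc)
  then show ?case
    using Suc.IH[of "int k * e"] by (simp add: conj_b_power algebra_simps)
qed simp

definition normal_form :: "nat \<Rightarrow> int \<Rightarrow> int \<Rightarrow> 'a" where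
  "normal_form p q s = inv (a [^] p) \<otimes> b [^] q \<otimes> a [^] s"

lemma normal_form_closed [simp]: "normal_form p q s \<in> carrier G"
  by (simp add: normal_form_def)

lemma normal_form_lift: "normal_form p q s = normal_form (p + t) (int k ^ t * q) (s + int t)"
proof -
  have "a [^] (p + t) = a [^] t \<otimes> a [^] p"
    by (simp add: nat_pow_mult add.commute)
  then have "inv (a [^] (p + t)) = inv (a [^] p) \<otimes> inv (a [^] t)"
    by (simp add: inv_mult_group)
  moreover have "a [^] (s + int t) = a [^] t \<otimes> a [^] s"
    using int_pow_mult[of a "int t" s] by (simp add: int_pow_int add.commute)
  moreover have "b [^] (int k ^ t * q) = a [^] t \<otimes> b [^] q \<otimes> inv (a [^] t)"
    by (simp add: conj_a_power_b_power)
  ultimately show ?thesis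
    by (simp add: normal_form_def m_assoc)
qed

lemma a_mult_normal_form:
  "a \<otimes> normal_form p q s = (if p = 0 then normal_form 0 (int k * q) (s + 1) else normal_form (p - 1) q s)"
proof (cases p)
  case 0
  have "a \<otimes> normal_form 0 q s = (a \<otimes> b [^] q \<otimes> inv a) \<otimes> (a \<otimes> a [^] s)"
    by (simp add: normal_form_def m_assoc)
  also have "\<dots> = normal_form 0 (int k * q) (s + 1)"
    using int_pow_mult[of a 1 s] by (simp add: normal_form_def conj_b_power add.commute)
  finally show ?thesis
    using 0 by simp
next
  case (Suc p')
  have "a \<otimes> inv (a [^] Suc p') = inv (a [^] p')"
    by (simp add: nat_pow_Suc inv_mult_group m_assoc[symmetric])
  then show ?thesis
    using Suc by (simp add: normal_form_def m_assoc[symmetric])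
qed

lemma inv_a_mult_normal_form: "inv a \<otimes> normal_form p q s = normal_form (Suc p) q s"
  by (simp add: normal_form_def nat_pow_Suc inv_mult_group m_assoc)

lemma b_power_mult_normal_form:
  "b [^] (e::int) \<otimes> normal_form p q s = normal_form p (int k ^ p * e + q) s"
proof -
  have "b [^] e \<otimes> inv (a [^] p) = inv (a [^] p) \<otimes> (a [^] p \<otimes> b [^] e \<otimes> inv (a [^] p))"
    by (simp add: m_assoc[symmetric])
  then have "b [^] e \<otimes> inv (a [^] p) = inv (a [^] p) \<otimes> b [^] (int k ^ p * e)"
    by (simp add: conj_a_power_b_power)
  then show ?thesis
    by (simp add: normal_form_def m_assoc[symmetric] int_pow_mult)
qed

end

section \<open>The ring \<open>Z[1/d]\<close>\<close>

locale baumslag_solitar =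
  fixes d :: nat
  assumes d_gt_1: "1 < d"
begin

abbreviation D :: rat where "D \<equiv> of_nat d"

lemma d_nonzero [simp]: "d \<noteq> 0"
  using d_gt_1 by simp

lemma D_powi_add: "D powi (a + b) = D powi a * D powi b"
  by (simp add: power_int_add)

lemma D_powi_uminus_mult [simp]: "D powi (- a) * D powi a = 1" "D powi a * D powi (- a) = 1"
  by (simp_all add: power_int_minus field_simps)

definition Zd :: "rat set" where
  "Zd = {of_int q / D ^ p | q p. True}"

lemma of_int_in_Zd [simp]: "of_int q \<in> Zd"
  unfolding Zd_def by (intro CollectI exI[of _ q] exI[of _ 0]) simp

lemma of_nat_in_Zd [simp]: "of_nat q \<in> Zd"
  using of_int_in_Zd[of "int q"] by simp

lemma zero_in_Zd [simp]: "0 \<in> Zd" and one_in_Zd [simp]: "1 \<in> Zd"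
  using of_int_in_Zd[of 0] of_int_in_Zd[of 1] by simp_all

lemma Zd_add [intro]:
  assumes "a \<in> Zd" and "b \<in> Zd"
  shows "a + b \<in> Zd"
proof -
  obtain q p q' p' where a: "a = of_int q / D ^ p" and b: "b = of_int q' / D ^ p'"
    using assms unfolding Zd_def by blast
  have "a + b = of_int (q * int d ^ p' + q' * int d ^ p) / D ^ (p + p')"
    unfolding a b by (simp add: field_simps power_add)
  then show ?thesis
    unfolding Zd_def by blast
qed

lemma Zd_mult [intro]:
  assumes "a \<in> Zd" and "b \<in> Zd"
  shows "a * b \<in> Zd"
proof -
  obtain q p q' p' where a: "a = of_int q / D ^ p" and b: "b = of_int q' / D ^ p'"
    using assms unfolding Zd_def by blast
  have "a * b = of_int (q * q') / D ^ (p + p')"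
    unfolding a b by (simp add: field_simps power_add)
  then show ?thesis
    unfolding Zd_def by blast
qed

lemma Zd_uminus [intro]:
  assumes "a \<in> Zd"
  shows "- a \<in> Zd"
proof -
  obtain q p where "a = of_int q / D ^ p"
    using assms unfolding Zd_def by blast
  then have "- a = of_int (- q) / D ^ p"
    by simp
  then show ?thesis
    unfolding Zd_def by blast
qed

lemma Zd_diff [intro]: "a \<in> Zd \<Longrightarrow> b \<in> Zd \<Longrightarrow> a - b \<in> Zd"
  using Zd_add[of a "- b"] by auto

lemma D_powi_in_Zd [simp]: "D powi s \<in> Zd"
proof (cases "s \<ge> 0")
  case True
  then show ?thesis
    using of_nat_in_Zd[of "d ^ nat s"] by (simp add: power_int_def)
next
  case False
  then have "D powi s = of_int 1 / D ^ nat (- s)"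
    by (simp add: power_int_def field_simps)
  then show ?thesis
    unfolding Zd_def by blast
qed

lemma D_power_in_Zd [simp]: "D ^ n \<in> Zd"
  using of_nat_in_Zd[of "d ^ n"] by simp

definition zcong :: "nat \<Rightarrow> rat \<Rightarrow> rat \<Rightarrow> bool" where
  "zcong m y y' \<longleftrightarrow> (\<exists>z\<in>Zd. y - y' = of_nat m * z)"

lemma zcong_refl [simp]: "zcong m y y"
  unfolding zcong_def by (intro bexI[of _ 0]) auto

lemma zcongI: "z \<in> Zd \<Longrightarrow> y - y' = of_nat m * z \<Longrightarrow> zcong m y y'"
  unfolding zcong_def by blast

lemma zcongE:
  assumes "zcong m y y'"
  obtains z where "z \<in> Zd" and "y - y' = of_nat m * z"
  using assms unfolding zcong_def by blast

lemma zcong_sym: "zcong m y y' \<Longrightarrow> zcong m y' y"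
  by (metis zcongE zcongI Zd_uminus minus_diff_eq mult_minus_right)

lemma zcong_trans [trans]:
  assumes "zcong m y y'" and "zcong m y' y''"
  shows "zcong m y y''"
proof -
  obtain z z' where "z \<in> Zd" "z' \<in> Zd"
    and "y - y' = of_nat m * z" and "y' - y'' = of_nat m * z'"
    using assms by (meson zcongE)
  then show ?thesis
    by (intro zcongI[of "z + z'"]) (auto simp: algebra_simps)
qed

lemma zcong_iff_diff: "zcong m y y' \<longleftrightarrow> zcong m (y - y') 0"
  by (simp add: zcong_def)

lemma zcong_swap: "zcong m (a - c) b \<Longrightarrow> zcong m (a - b) c"
  unfolding zcong_def by (simp add: algebra_simps)

lemma zcong_add:
  assumes "zcong m a b" and "zcong m a' b'"
  shows "zcong m (a + a') (b + b')"
proof -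
  obtain z z' where "z \<in> Zd" "z' \<in> Zd"
    and "a - b = of_nat m * z" and "a' - b' = of_nat m * z'"
    using assms by (meson zcongE)
  then show ?thesis
    by (intro zcongI[of "z + z'"]) (auto simp: algebra_simps)
qed

lemma zcong_diff:
  assumes "zcong m a b" and "zcong m a' b'"
  shows "zcong m (a - a') (b - b')"
proof -
  obtain z z' where "z \<in> Zd" "z' \<in> Zd"
    and "a - b = of_nat m * z" and "a' - b' = of_nat m * z'"
    using assms by (meson zcongE)
  then show ?thesis
    by (intro zcongI[of "z - z'"]) (auto simp: algebra_simps)
qed

lemma zcong_mult_left:
  assumes "w \<in> Zd" and "zcong m a b"
  shows "zcong m (w * a) (w * b)"
proof -
  obtain z where "z \<in> Zd" "a - b = of_nat m * z"
    using assms(2) by (rule zcongE)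
  then show ?thesis
    using assms(1) by (intro zcongI[of "w * z"]) (auto simp: algebra_simps)
qed

lemma zcong_mult_modulus_iff:
  assumes "c > 0"
  shows "zcong (c * g) (of_nat c * a) (of_nat c * b) \<longleftrightarrow> zcong g a b"
proof -
  have "of_nat c * a - of_nat c * b = of_nat (c * g) * z \<longleftrightarrow> a - b = of_nat g * z" for z :: rat
    using assms by (auto simp: right_diff_distrib[symmetric] mult.assoc)
  then show ?thesis
    unfolding zcong_def by simp
qed

lemma zcong_of_int_iff:
  assumes "coprime m d"
  shows "zcong m (of_int a) (of_int b) \<longleftrightarrow> [a = b] (mod int m)"
proof
  assume "[a = b] (mod int m)"
  then obtain t where "a - b = int m * t"
    by (metis cong_iff_dvd_diff cong_sym_eq dvdE)
  then have "(of_int a :: rat) - of_int b = of_nat m * of_int t"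
    by (metis of_int_diff of_int_mult of_int_of_nat_eq)
  then show "zcong m (of_int a) (of_int b)"
    unfolding zcong_def by (intro bexI[of _ "of_int t"]) auto
next
  assume "zcong m (of_int a) (of_int b)"
  then obtain q p where "(of_int a :: rat) - of_int b = of_nat m * (of_int q / D ^ p)"
    unfolding zcong_def Zd_def by blast
  then have "of_int ((a - b) * int d ^ p) = (of_int (int m * q) :: rat)"
    by (simp add: field_simps)
  then have "int m dvd (a - b) * int d ^ p"
    by (metis dvd_triv_left of_int_eq_iff)
  moreover have "coprime (int m) (int d ^ p)"
    using assms by simp
  ultimately show "[a = b] (mod int m)"
    by (simp add: cong_iff_dvd_diff coprime_dvd_mult_left_iff)
qed

lemma zcong_of_nat_iff:
  "coprime m d \<Longrightarrow> zcong m (of_nat a) (of_nat b) \<longleftrightarrow> [a = b] (mod m)"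
  using zcong_of_int_iff[of m "int a" "int b"] by (simp add: cong_int_iff)

lemma zcong_of_nat_power_iff:
  "coprime m d \<Longrightarrow> zcong m (of_nat a) (D powi int j * of_nat b) \<longleftrightarrow> [a = b * d ^ j] (mod m)"
  using zcong_of_nat_iff[of m a "b * d ^ j"] by (simp add: mult.commute)

text \<open>Since \<open>d\<close> is a unit modulo \<open>m\<close>, \<open>Z[1/d] / m Z[1/d] = Z / m Z\<close>.\<close>

lemma zcong_nat_representative:
  assumes "y \<in> Zd" and "coprime m d" and "m > 0"
  obtains r where "r < m" and "zcong m y (of_nat r)"
proof -
  obtain q p where y: "y = of_int q / D ^ p"
    using assms(1) unfolding Zd_def by blast
  have "coprime (int d ^ p) (int m)"
    using assms(2) by (simp add: coprime_commute)
  then obtain u where u: "[int d ^ p * u = 1] (mod int m)"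
    using cong_solve_coprime_int by blast
  define r where "r = nat ((q * u) mod int m)"
  have "[int d ^ p * (q * u) = q] (mod int m)"
    using cong_scalar_right[OF u, of q] by (simp add: ac_simps)
  then have "zcong m (of_int (int d ^ p * (q * u))) (of_int q)"
    using zcong_of_int_iff[OF assms(2)] by blast
  moreover have "1 / D ^ p \<in> Zd"
    unfolding Zd_def by (intro CollectI exI[of _ 1] exI[of _ p]) simp
  ultimately have "zcong m (1 / D ^ p * of_int (int d ^ p * (q * u))) (1 / D ^ p * of_int q)"
    by (intro zcong_mult_left)
  then have "zcong m y (of_int (q * u))"
    by (simp add: y zcong_sym)
  also have "[q * u = int r] (mod int m)"
    using assms(3) by (simp add: r_def cong_def)
  then have "zcong m (of_int (q * u)) (of_nat r)"
    using zcong_of_int_iff[OF assms(2)] by (metis of_int_of_nat_eq)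
  finally have "zcong m y (of_nat r)" .
  moreover have "r < m"
    using assms(3) by (simp add: r_def nat_less_iff)
  ultimately show ?thesis
    using that by blast
qed

lemma zcong_gcd_iff:
  "zcong (gcd m e) a b \<longleftrightarrow> (\<exists>z\<in>Zd. zcong m a (b - of_nat e * z))"
proof
  assume "zcong (gcd m e) a b"
  then obtain w where w: "w \<in> Zd" "a - b = of_nat (gcd m e) * w"
    unfolding zcong_def by blast
  obtain u v where "u * int m + v * int e = int (gcd m e)"
    using bezout_int[of "int m" "int e"] by auto
  then have "of_int u * of_nat m + of_int v * of_nat e = (of_nat (gcd m e) :: rat)"
    by (metis of_int_add of_int_mult of_int_of_nat_eq)
  then have "a - b = (of_int u * of_nat m + of_int v * of_nat e) * w"
    using w(2) by simp
  then have "a - (b - of_nat e * (- (of_int v * w))) = of_nat m * (of_int u * w)"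
    by (simp add: algebra_simps)
  then show "\<exists>z\<in>Zd. zcong m a (b - of_nat e * z)"
    using w(1) by (intro bexI[of _ "- (of_int v * w)"] zcongI[of "of_int u * w"]) (auto intro!: Zd_mult)
next
  assume "\<exists>z\<in>Zd. zcong m a (b - of_nat e * z)"
  then obtain z w where zw: "z \<in> Zd" "w \<in> Zd" and "a - (b - of_nat e * z) = of_nat m * w"
    by (meson zcongE)
  then have "a - b = of_nat m * w - of_nat e * z"
    by (simp add: algebra_simps)
  moreover obtain m' e' where "m = gcd m e * m'" and "e = gcd m e * e'"
    by (meson dvdE gcd_dvd1 gcd_dvd2)
  then have "(of_nat m :: rat) = of_nat (gcd m e) * of_nat m'"
    and "(of_nat e :: rat) = of_nat (gcd m e) * of_nat e'"
    by (metis of_nat_mult)+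
  ultimately have "a - b = of_nat (gcd m e) * (of_nat m' * w - of_nat e' * z)"
    by (simp add: algebra_simps)
  then show "zcong (gcd m e) a b"
    using zw by (intro zcongI[of "of_nat m' * w - of_nat e' * z"]) (auto intro!: Zd_diff Zd_mult)
qed

definition orbit_cong :: "nat \<Rightarrow> rat \<Rightarrow> rat \<Rightarrow> bool" where
  "orbit_cong m x y \<longleftrightarrow> (\<exists>s::int. zcong m x (D powi s * y))"

lemma zcong_D_powi_swap:
  assumes "zcong m x (D powi s * y)"
  shows "zcong m y (D powi (- s) * x)"
proof -
  have "zcong m (D powi (- s) * x) (D powi (- s) * (D powi s * y))"
    using zcong_mult_left[OF D_powi_in_Zd assms] .
  then show ?thesis
    by (simp add: mult.assoc[symmetric] zcong_sym)
qed

lemma orbit_cong_refl: "orbit_cong m x x"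
  unfolding orbit_cong_def by (intro exI[of _ 0]) simp

lemma orbit_cong_sym: "orbit_cong m x y \<Longrightarrow> orbit_cong m y x"
  unfolding orbit_cong_def using zcong_D_powi_swap by blast

lemma orbit_cong_trans: "orbit_cong m x y \<Longrightarrow> orbit_cong m y z \<Longrightarrow> orbit_cong m x z"
proof -
  assume "orbit_cong m x y" "orbit_cong m y z"
  then obtain s t where "zcong m x (D powi s * y)" "zcong m y (D powi t * z)"
    unfolding orbit_cong_def by blast
  then have "zcong m x (D powi s * (D powi t * z))"
    using zcong_trans zcong_mult_left[OF D_powi_in_Zd] by blast
  then show "orbit_cong m x z"
    unfolding orbit_cong_def by (metis D_powi_add mult.assoc)
qed

lemma orbit_cong_mult_modulus_iff:
  "c > 0 \<Longrightarrow> orbit_cong (c * g) (of_nat c * x) (of_nat c * y) \<longleftrightarrow> orbit_cong g x y"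
  unfolding orbit_cong_def using zcong_mult_modulus_iff[of c g x]
  by (simp add: mult.left_commute)

lemma orbit_cong_of_nat_iff:
  assumes "coprime m d"
  shows "orbit_cong m (of_nat a) (of_nat b) \<longleftrightarrow>
    (\<exists>j. [a = b * d ^ j] (mod m) \<or> [b = a * d ^ j] (mod m))"
proof
  assume "orbit_cong m (of_nat a) (of_nat b)"
  then obtain s where s: "zcong m (of_nat a) (D powi s * of_nat b)"
    unfolding orbit_cong_def by blast
  show "\<exists>j. [a = b * d ^ j] (mod m) \<or> [b = a * d ^ j] (mod m)"
  proof (cases "s \<ge> 0")
    case True
    then show ?thesis
      using s zcong_of_nat_power_iff[OF assms, of a "nat s" b] by auto
  next
    case False
    then show ?thesis
      using zcong_D_powi_swap[OF s] zcong_of_nat_power_iff[OF assms, of b "nat (- s)" a] by auto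
  qed
next
  assume "\<exists>j. [a = b * d ^ j] (mod m) \<or> [b = a * d ^ j] (mod m)"
  then show "orbit_cong m (of_nat a) (of_nat b)"
    using zcong_of_nat_power_iff[OF assms] orbit_cong_sym unfolding orbit_cong_def by blast
qed

section \<open>The affine model of \<open>G\<close>\<close>

text \<open>The pair \<open>(y, l)\<close> stands for the affine map \<open>t \<mapsto> y + d^l t\<close> of \<open>Z[1/d]\<close>;
  the generators \<open>a\<close> and \<open>b\<close> of the presentation become \<open>(0, 1)\<close> and \<open>(1, 0)\<close>.\<close>

definition Aff :: "(rat \<times> int) monoid" where
  "Aff = \<lparr>carrier = Zd \<times> UNIV, monoid.mult = (\<lambda>(y, l) (y', l'). (y + D powi l * y', l + l')),
          one = (0, 0)\<rparr>"

lemma Aff_carrier [simp]: "carrier Aff = Zd \<times> UNIV"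
  and Aff_mult [simp]: "(y, l) \<otimes>\<^bsub>Aff\<^esub> (y', l') = (y + D powi l * y', l + l')"
  and Aff_one [simp]: "\<one>\<^bsub>Aff\<^esub> = (0, 0)"
  by (simp_all add: Aff_def)

lemma Aff_group: "group Aff"
proof (rule groupI)
  fix x y z assume "x \<in> carrier Aff" "y \<in> carrier Aff" "z \<in> carrier Aff"
  then show "x \<otimes>\<^bsub>Aff\<^esub> y \<otimes>\<^bsub>Aff\<^esub> z = x \<otimes>\<^bsub>Aff\<^esub> (y \<otimes>\<^bsub>Aff\<^esub> z)"
    by (cases x, cases y, cases z) (simp add: D_powi_add algebra_simps)
next
  fix x assume "x \<in> carrier Aff"
  then obtain y l where "x = (y, l)" "y \<in> Zd"
    by auto
  then have "(- (D powi (- l) * y), - l) \<in> carrier Aff"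
    and "(- (D powi (- l) * y), - l) \<otimes>\<^bsub>Aff\<^esub> x = \<one>\<^bsub>Aff\<^esub>"
    by (auto intro!: Zd_uminus Zd_mult simp: mult.assoc[symmetric])
  then show "\<exists>y\<in>carrier Aff. y \<otimes>\<^bsub>Aff\<^esub> x = \<one>\<^bsub>Aff\<^esub>"
    by blast
qed (auto intro!: Zd_add Zd_mult)

sublocale Aff: group Aff
  by (rule Aff_group)

lemma Aff_inv [simp]: "y \<in> Zd \<Longrightarrow> inv\<^bsub>Aff\<^esub> (y, l) = (- (D powi (- l) * y), - l)"
  by (rule Aff.inv_equality) (auto intro!: Zd_uminus Zd_mult simp: mult.assoc[symmetric])

lemma Aff_mult_inv:
  "y' \<in> Zd \<Longrightarrow> (y, l) \<otimes>\<^bsub>Aff\<^esub> inv\<^bsub>Aff\<^esub> (y', l') = (y - D powi (l - l') * y', l - l')"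
  by (simp add: D_powi_add[symmetric])

lemma Aff_conj:
  assumes "z \<in> Zd"
  shows "(z, s) \<otimes>\<^bsub>Aff\<^esub> (y, l) \<otimes>\<^bsub>Aff\<^esub> inv\<^bsub>Aff\<^esub> (z, s) = (z + D powi s * y - D powi l * z, l)"
proof -
  have "D powi (s + l) * (D powi (- s) * z) = D powi l * z"
    by (simp add: D_powi_add algebra_simps)
  then show ?thesis
    using assms by simp
qed

lemma Aff_int_pow_level_zero: "y \<in> Zd \<Longrightarrow> (y, 0) [^]\<^bsub>Aff\<^esub> (q::int) = (of_int q * y, 0)"
proof (induction q rule: int_induct[where k = 0])
  case (step1 i)
  then show ?case
    using Aff.int_pow_mult[of "(y, 0)" i 1] by (simp add: algebra_simps)
next
  case (step2 i)
  then show ?case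
    using Aff.int_pow_mult[of "(y, 0)" i "- 1"] Aff.int_pow_neg[of "(y, 0)" 1]
    by (simp add: algebra_simps)
qed simp

text \<open>The \<open>y\<close>-coordinate of the powers of \<open>(x, k)\<close>: a geometric series in \<open>d^k\<close>.\<close>

definition geom :: "nat \<Rightarrow> rat \<Rightarrow> int \<Rightarrow> rat" where
  "geom k x l = x * (D powi l - 1) / (D ^ k - 1)"

lemma geom_zero [simp]: "geom k x 0 = 0"
  by (simp add: geom_def)

lemma geom_add: "geom k x (l + l') = geom k x l + D powi l * geom k x l'"
proof -
  have "x * (D powi (l + l') - 1) = x * (D powi l - 1) + D powi l * (x * (D powi l' - 1))"
    by (simp add: D_powi_add algebra_simps)
  then show ?thesis
    unfolding geom_def by (simp add: add_divide_distrib)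
qed

lemma geom_uminus: "geom k x (- l) = - (D powi (- l) * geom k x l)"
  using geom_add[of k x "- l" l] by (simp add: algebra_simps)

lemma D_power_neq_1:
  assumes "k \<ge> 1"
  shows "D ^ k \<noteq> 1"
proof -
  have "1 < d ^ k"
    using one_less_power[OF d_gt_1] assms by simp
  then show ?thesis
    by (metis less_irrefl of_nat_eq_1_iff of_nat_power)
qed

lemma geom_self: "k \<ge> 1 \<Longrightarrow> geom k x (int k) = x"
  unfolding geom_def using D_power_neq_1[of k] by simp

lemma Aff_int_pow:
  assumes "k \<ge> 1" and "x \<in> Zd"
  shows "(x, int k) [^]\<^bsub>Aff\<^esub> (q::int) = (geom k x (int k * q), int k * q)"
proof (induction q rule: int_induct[where k = 0])
  case (step1 i)
  have "geom k x (int k * (i + 1)) = geom k x (int k * i) + D powi (int k * i) * x"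
    using geom_add[of k x "int k * i" "int k"] geom_self[OF assms(1)] by (simp add: algebra_simps)
  then show ?case
    using step1 Aff.int_pow_mult[of "(x, int k)" i 1] assms(2) by (simp add: algebra_simps)
next
  case (step2 i)
  have e1: "geom k x (int k * i) = geom k x (int k * (i - 1)) + D powi (int k * (i - 1)) * x"
    using geom_add[of k x "int k * (i - 1)" "int k"] geom_self[OF assms(1)] by (simp add: algebra_simps)
  have e2: "D powi (int k * i) * (D powi (- int k) * x) = D powi (int k * (i - 1)) * x"
    by (simp add: D_powi_add[symmetric] algebra_simps)
  have "geom k x (int k * i) - D powi (int k * i) * (D powi (- int k) * x)
      = geom k x (int k * (i - 1))"
    unfolding e1 e2 by simp
  moreover have "(x, int k) [^]\<^bsub>Aff\<^esub> (i - 1) = (x, int k) [^]\<^bsub>Aff\<^esub> i \<otimes>\<^bsub>Aff\<^esub> inv\<^bsub>Aff\<^esub> (x, int k)"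
    using Aff.int_pow_diff[of "(x, int k)" i 1] assms(2) by simp
  ultimately show ?case
    using step2 assms(2) by (simp add: algebra_simps)
qed simp

lemma Aff_pow_generators: "(0, 1) [^]\<^bsub>Aff\<^esub> (j::int) = (0, j)" "(1, 0) [^]\<^bsub>Aff\<^esub> (j::int) = (of_int j, 0)"
  using Aff_int_pow[of 1 0 j] Aff_int_pow_level_zero[of 1 j] by (simp_all add: geom_def)

lemma geom_in_Zd:
  assumes "k \<ge> 1" and "x \<in> Zd" and "int k dvd l"
  shows "geom k x l \<in> Zd"
proof -
  obtain q where "l = int k * q"
    using assms(3) by (rule dvdE)
  then have "(geom k x l, l) \<in> carrier Aff"
    using Aff.int_pow_closed[of "(x, int k)" q] Aff_int_pow[OF assms(1,2)] assms(2) by simp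
  then show ?thesis
    by simp
qed

lemma zcong_geom:
  assumes "k \<ge> 1" and "int k dvd l" and "zcong m x x'"
  shows "zcong m (geom k x l) (geom k x' l)"
proof -
  have "geom k x l = geom k 1 l * x" and "geom k x' l = geom k 1 l * x'"
    by (simp_all add: geom_def)
  then show ?thesis
    using zcong_mult_left[OF geom_in_Zd[OF assms(1) one_in_Zd assms(2)] assms(3)] by simp
qed

text \<open>The subgroup generated by \<open>(x, k)\<close> and \<open>m Z[1/d] \<times> {0}\<close>.\<close>

definition std_subgroup :: "nat \<Rightarrow> nat \<Rightarrow> rat \<Rightarrow> (rat \<times> int) set" where
  "std_subgroup k m x = {(y, l). y \<in> Zd \<and> int k dvd l \<and> zcong m y (geom k x l)}"

lemma mem_std_subgroup:
  "(y, l) \<in> std_subgroup k m x \<longleftrightarrow> y \<in> Zd \<and> int k dvd l \<and> zcong m y (geom k x l)"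
  by (simp add: std_subgroup_def)

lemma std_subgroup_cong:
  assumes "k \<ge> 1" and "zcong m x x'"
  shows "std_subgroup k m x = std_subgroup k m x'"
proof -
  have "zcong m y (geom k x l) \<longleftrightarrow> zcong m y (geom k x' l)" if "int k dvd l" for y l
    using zcong_geom[OF assms(1) that assms(2)] zcong_trans zcong_sym by blast
  then show ?thesis
    unfolding std_subgroup_def by auto
qed

lemma std_subgroup_subgroup:
  assumes "k \<ge> 1"
  shows "subgroup (std_subgroup k m x) Aff"
proof (rule Aff.subgroupI)
  show "std_subgroup k m x \<subseteq> carrier Aff"
    by (auto simp: std_subgroup_def)
  show "std_subgroup k m x \<noteq> {}"
    using mem_std_subgroup[of 0 0 k m x] by auto
next
  fix a assume "a \<in> std_subgroup k m x"
  then obtain y l where a: "a = (y, l)" and y: "y \<in> Zd" "int k dvd l" "zcong m y (geom k x l)"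
    by (auto simp: std_subgroup_def)
  have "zcong m (- (D powi (- l) * y)) (- (D powi (- l) * geom k x l))"
    using zcong_diff[OF zcong_refl[of m 0] zcong_mult_left[OF D_powi_in_Zd[of "- l"] y(3)]] by simp
  then show "inv\<^bsub>Aff\<^esub> a \<in> std_subgroup k m x"
    using y by (simp add: a mem_std_subgroup geom_uminus Zd_uminus Zd_mult)
next
  fix a b assume "a \<in> std_subgroup k m x" "b \<in> std_subgroup k m x"
  then obtain y l y' l' where ab: "a = (y, l)" "b = (y', l')"
    and y: "y \<in> Zd" "int k dvd l" "zcong m y (geom k x l)"
    and y': "y' \<in> Zd" "int k dvd l'" "zcong m y' (geom k x l')"
    by (auto simp: std_subgroup_def)
  have "zcong m (y + D powi l * y') (geom k x (l + l'))"
    unfolding geom_add by (intro zcong_add y(3) zcong_mult_left y'(3) D_powi_in_Zd)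
  then show "a \<otimes>\<^bsub>Aff\<^esub> b \<in> std_subgroup k m x"
    using y y' by (simp add: ab mem_std_subgroup Zd_add Zd_mult)
qed

lemma conj_mem_std_subgroup:
  assumes "k \<ge> 1" and "z \<in> Zd" and "(y, l) \<in> std_subgroup k m x"
  shows "(z, s) \<otimes>\<^bsub>Aff\<^esub> (y, l) \<otimes>\<^bsub>Aff\<^esub> inv\<^bsub>Aff\<^esub> (z, s)
           \<in> std_subgroup k m (D powi s * x - (D ^ k - 1) * z)"
proof -
  have y: "y \<in> Zd" "int k dvd l" "zcong m y (geom k x l)"
    using assms(3) by (simp_all add: mem_std_subgroup)
  have "geom k (D powi s * x - (D ^ k - 1) * z) l = D powi s * geom k x l - (D powi l - 1) * z"
    unfolding geom_def using D_power_neq_1[OF assms(1)] by (simp add: field_simps)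
  moreover have "zcong m (z + D powi s * y - D powi l * z) (D powi s * geom k x l - (D powi l - 1) * z)"
    using zcong_add[OF zcong_mult_left[OF D_powi_in_Zd y(3)] zcong_refl[of m "z - D powi l * z"]]
    by (simp add: algebra_simps)
  ultimately show ?thesis
    unfolding Aff_conj[OF assms(2)] using assms(2) y by (simp add: mem_std_subgroup Zd_add Zd_diff Zd_mult)
qed

lemma std_subgroup_conj:
  assumes "k \<ge> 1" and "z \<in> Zd"
  shows "(\<lambda>h. (z, s) \<otimes>\<^bsub>Aff\<^esub> h \<otimes>\<^bsub>Aff\<^esub> inv\<^bsub>Aff\<^esub> (z, s)) ` std_subgroup k m x
           = std_subgroup k m (D powi s * x - (D ^ k - 1) * z)"
    (is "?conj ` _ = std_subgroup k m ?x'")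
proof (rule Aff.conj_image_eqI)
  show "?conj ` std_subgroup k m x \<subseteq> std_subgroup k m ?x'"
  proof (rule image_subsetI)
    fix h assume "h \<in> std_subgroup k m x"
    then obtain y l where "h = (y, l)" "(y, l) \<in> std_subgroup k m x"
      by (cases h) auto
    then show "?conj h \<in> std_subgroup k m ?x'"
      using conj_mem_std_subgroup[OF assms] by simp
  qed
  define z' where "z' = - (D powi (- s) * z)"
  have z': "z' \<in> Zd" and inv: "inv\<^bsub>Aff\<^esub> (z, s) = (z', - s)"
    using assms(2) by (auto simp: z'_def intro!: Zd_uminus Zd_mult)
  have inv': "inv\<^bsub>Aff\<^esub> (z', - s) = (z, s)"
    using Aff.inv_inv[of "(z, s)"] assms(2) by (simp only: inv) simp
  have "D powi (- s) * ?x' = x - D powi (- s) * (D ^ k - 1) * z"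
    by (simp add: right_diff_distrib mult.assoc[symmetric])
  then have x: "D powi (- s) * ?x' - (D ^ k - 1) * z' = x"
    by (simp add: z'_def algebra_simps)
  show "(\<lambda>h. inv\<^bsub>Aff\<^esub> (z, s) \<otimes>\<^bsub>Aff\<^esub> h \<otimes>\<^bsub>Aff\<^esub> inv\<^bsub>Aff\<^esub> (inv\<^bsub>Aff\<^esub> (z, s)))
      ` std_subgroup k m ?x' \<subseteq> std_subgroup k m x"
  proof (rule image_subsetI)
    fix h assume "h \<in> std_subgroup k m ?x'"
    then obtain y l where "h = (y, l)" "(y, l) \<in> std_subgroup k m ?x'"
      by (cases h) auto
    then show "inv\<^bsub>Aff\<^esub> (z, s) \<otimes>\<^bsub>Aff\<^esub> h \<otimes>\<^bsub>Aff\<^esub> inv\<^bsub>Aff\<^esub> (inv\<^bsub>Aff\<^esub> (z, s))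
        \<in> std_subgroup k m x"
      using conj_mem_std_subgroup[OF assms(1) z', of y l m ?x' "- s"]
      unfolding inv inv' x by simp
  qed
qed (use subgroup.subset[OF std_subgroup_subgroup[OF assms(1)]] assms(2) in auto)

lemma std_subgroup_rcoset_representative:
  assumes "k \<ge> 1" and "m \<ge> 1" and "coprime m d" and "x \<in> Zd" and g: "g \<in> carrier Aff"
  obtains r j where "r < m" and "j < k"
    and "std_subgroup k m x #>\<^bsub>Aff\<^esub> g = std_subgroup k m x #>\<^bsub>Aff\<^esub> (of_nat r, int j)"
proof -
  obtain y l where gyl: "g = (y, l)" and y: "y \<in> Zd"
    using g by auto
  define j where "j = nat (l mod int k)"
  define s where "s = l - int j"
  have "j < k" "int k dvd s"
    using assms(1) by (simp_all add: j_def s_def nat_less_iff minus_mod_eq_mult_div)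
  then have c: "geom k x s \<in> Zd"
    using geom_in_Zd assms(1,4) by blast
  have w: "D powi (- s) * (y - geom k x s) \<in> Zd"
    using y c by (intro Zd_mult Zd_diff) auto
  obtain r where "r < m" and r: "zcong m (D powi (- s) * (y - geom k x s)) (of_nat r)"
    using zcong_nat_representative[OF w assms(3)] assms(2) by auto
  have "D powi s * (D powi (- s) * (y - geom k x s)) = y - geom k x s"
    by (simp add: mult.assoc[symmetric])
  then have "zcong m (y - geom k x s) (D powi s * of_nat r)"
    using zcong_mult_left[OF D_powi_in_Zd[of s] r] by metis
  then have "zcong m (y - D powi s * of_nat r) (geom k x s)"
    by (rule zcong_swap)
  moreover have "g \<otimes>\<^bsub>Aff\<^esub> inv\<^bsub>Aff\<^esub> (of_nat r, int j) = (y - D powi s * of_nat r, s)"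
    unfolding gyl s_def by (rule Aff_mult_inv) simp
  ultimately have "g \<otimes>\<^bsub>Aff\<^esub> inv\<^bsub>Aff\<^esub> (of_nat r, int j) \<in> std_subgroup k m x"
    using y \<open>int k dvd s\<close> by (simp add: mem_std_subgroup Zd_diff Zd_mult)
  then have "std_subgroup k m x #>\<^bsub>Aff\<^esub> g = std_subgroup k m x #>\<^bsub>Aff\<^esub> (of_nat r, int j)"
    using Aff.rcos_eq_iff[OF std_subgroup_subgroup[OF assms(1)] g] by simp
  then show ?thesis
    using that \<open>r < m\<close> \<open>j < k\<close> by blast
qed

lemma std_subgroup_rcoset_representative_unique:
  assumes "k \<ge> 1" and "coprime m d" and "r < m" "r' < m" "j < k" "j' < k"
    and eq: "std_subgroup k m x #>\<^bsub>Aff\<^esub> (of_nat r, int j) = std_subgroup k m x #>\<^bsub>Aff\<^esub> (of_nat r', int j')"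
  shows "r = r' \<and> j = j'"
proof -
  have "(of_nat r, int j) \<otimes>\<^bsub>Aff\<^esub> inv\<^bsub>Aff\<^esub> (of_nat r', int j') \<in> std_subgroup k m x"
    using eq Aff.rcos_eq_iff[OF std_subgroup_subgroup[OF assms(1)], of "(of_nat r, int j)" "(of_nat r', int j')"]
    by simp
  then have "(of_nat r - D powi (int j - int j') * of_nat r', int j - int j') \<in> std_subgroup k m x"
    by (simp only: Aff_mult_inv[OF of_nat_in_Zd])
  then have "int k dvd int j - int j'"
    and r: "zcong m (of_nat r - D powi (int j - int j') * of_nat r') (geom k x (int j - int j'))"
    unfolding mem_std_subgroup by blast+
  then have "int j mod int k = int j' mod int k"
    by (simp add: mod_eq_dvd_iff)
  then have "j = j'"
    using assms(5,6) by (metis mod_less of_nat_eq_iff of_nat_mod)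
  then have "zcong m (of_nat r) (of_nat r')"
    using r zcong_iff_diff by simp
  then have "[r = r'] (mod m)"
    using zcong_of_nat_iff[OF assms(2)] by blast
  then show ?thesis
    using \<open>j = j'\<close> assms(3,4) by (simp add: cong_def)
qed

lemma std_subgroup_index:
  assumes "k \<ge> 1" and "m \<ge> 1" and "coprime m d" and "x \<in> Zd"
  shows "finite (rcosets\<^bsub>Aff\<^esub> std_subgroup k m x)"
    and "card (rcosets\<^bsub>Aff\<^esub> std_subgroup k m x) = k * m"
proof -
  let ?H = "std_subgroup k m x" and ?A = "{..<m} \<times> {..<k}"
  define f where "f = (\<lambda>(r, j). ?H #>\<^bsub>Aff\<^esub> (of_nat r :: rat, int j))"
  have "f ` ?A = rcosets\<^bsub>Aff\<^esub> ?H"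
  proof
    show "f ` ?A \<subseteq> rcosets\<^bsub>Aff\<^esub> ?H"
      by (auto simp: f_def intro!: Aff.rcosetsI subgroup.subset[OF std_subgroup_subgroup[OF assms(1)]])
    show "rcosets\<^bsub>Aff\<^esub> ?H \<subseteq> f ` ?A"
    proof
      fix X assume "X \<in> rcosets\<^bsub>Aff\<^esub> ?H"
      then obtain g where "g \<in> carrier Aff" "X = ?H #>\<^bsub>Aff\<^esub> g"
        by (auto simp: RCOSETS_def)
      moreover obtain r j where "r < m" "j < k" "?H #>\<^bsub>Aff\<^esub> g = f (r, j)"
        using std_subgroup_rcoset_representative[OF assms \<open>g \<in> carrier Aff\<close>] unfolding f_def by auto
      ultimately show "X \<in> f ` ?A"
        by (intro image_eqI[of _ _ "(r, j)"]) auto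
    qed
  qed
  moreover have "inj_on f ?A"
  proof (rule inj_onI)
    fix a b assume "a \<in> ?A" "b \<in> ?A" "f a = f b"
    then show "a = b"
      using std_subgroup_rcoset_representative_unique[OF assms(1,3)] by (auto simp: f_def)
  qed
  ultimately show "finite (rcosets\<^bsub>Aff\<^esub> ?H)" and "card (rcosets\<^bsub>Aff\<^esub> ?H) = k * m"
    using card_image[of f ?A] finite_imageI[of ?A f] by (simp_all add: card_cartesian_product)
qed

lemma generator_mem_std_subgroup: "k \<ge> 1 \<Longrightarrow> x \<in> Zd \<Longrightarrow> (x, int k) \<in> std_subgroup k m x"
  by (simp add: mem_std_subgroup geom_self)

lemma level_zero_mem_std_subgroup: "(y, 0) \<in> std_subgroup k m x \<longleftrightarrow> y \<in> Zd \<and> zcong m y 0"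
  by (simp add: mem_std_subgroup)

lemma modulus_mem_std_subgroup: "(of_nat m, 0) \<in> std_subgroup k m x"
  unfolding level_zero_mem_std_subgroup by (auto intro: zcongI[of 1])

lemma std_subgroup_eqD:
  assumes "k \<ge> 1" "k' \<ge> 1" and "coprime m d" "coprime m' d" and "x \<in> Zd" "x' \<in> Zd"
    and eq: "std_subgroup k m x = std_subgroup k' m' x'"
  shows "k = k'" and "m = m'" and "zcong m x x'"
proof -
  have "(x, int k) \<in> std_subgroup k' m' x'" "(x', int k') \<in> std_subgroup k m x"
    using generator_mem_std_subgroup assms eq by blast+
  then have "int k' dvd int k" "int k dvd int k'"
    by (simp_all add: mem_std_subgroup)
  then show "k = k'"
    by (simp add: dvd_antisym)
  have "(of_nat m, 0) \<in> std_subgroup k' m' x'" "(of_nat m', 0) \<in> std_subgroup k m x"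
    using modulus_mem_std_subgroup eq by blast+
  then have "[m = 0] (mod m')" "[m' = 0] (mod m)"
    using zcong_of_nat_iff[OF assms(4), of m 0] zcong_of_nat_iff[OF assms(3), of m' 0]
    by (simp_all add: level_zero_mem_std_subgroup)
  then show "m = m'"
    by (simp add: cong_0_iff dvd_antisym)
  have "zcong m x (geom k x' (int k))"
    using \<open>(x, int k) \<in> std_subgroup k' m' x'\<close> \<open>k = k'\<close> \<open>m = m'\<close> by (simp add: mem_std_subgroup)
  then show "zcong m x x'"
    by (simp add: geom_self[OF assms(1)])
qed

lemma std_subgroup_conj_iff:
  assumes "k \<ge> 1" "k' \<ge> 1" and "coprime m d" "coprime m' d" and "x \<in> Zd" "x' \<in> Zd"
  shows "(std_subgroup k m x, std_subgroup k' m' x') \<in> subgroup_conj Aff \<longleftrightarrow>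
    k = k' \<and> m = m' \<and> orbit_cong (gcd m (d ^ k - 1)) x' x"
proof -
  have e: "of_nat (d ^ k - 1) = D ^ k - 1"
    using d_gt_1 by (simp add: of_nat_diff)
  have "(std_subgroup k m x, std_subgroup k' m' x') \<in> subgroup_conj Aff \<longleftrightarrow>
      (\<exists>z\<in>Zd. \<exists>s. std_subgroup k' m' x' = std_subgroup k m (D powi s * x - (D ^ k - 1) * z))"
    unfolding Aff.subgroup_conj_iff Aff_carrier split_paired_Bex_Sigma
    using std_subgroup_subgroup assms(1,2)
    by (simp add: std_subgroup_conj[OF assms(1)] del: Aff_inv Aff_mult)
  also have "\<dots> \<longleftrightarrow> k = k' \<and> m = m' \<and>
      (\<exists>s. \<exists>z\<in>Zd. zcong m x' (D powi s * x - of_nat (d ^ k - 1) * z))"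
  proof (intro iffI; elim bexE exE conjE)
    fix z s assume "z \<in> Zd" and eq: "std_subgroup k' m' x' = std_subgroup k m (D powi s * x - (D ^ k - 1) * z)"
    then have "D powi s * x - (D ^ k - 1) * z \<in> Zd"
      using assms(5) by (auto intro!: Zd_diff Zd_mult)
    then show "k = k' \<and> m = m' \<and> (\<exists>s. \<exists>z\<in>Zd. zcong m x' (D powi s * x - of_nat (d ^ k - 1) * z))"
      using std_subgroup_eqD[OF assms(2,1,4,3,6) _ eq] \<open>z \<in> Zd\<close> unfolding e by metis
  next
    fix s z assume "k = k'" "m = m'" "z \<in> Zd" "zcong m x' (D powi s * x - of_nat (d ^ k - 1) * z)"
    then show "\<exists>z\<in>Zd. \<exists>s. std_subgroup k' m' x' = std_subgroup k m (D powi s * x - (D ^ k - 1) * z)"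
      using std_subgroup_cong[OF assms(1)] unfolding e by metis
  qed
  also have "\<dots> \<longleftrightarrow> k = k' \<and> m = m' \<and> orbit_cong (gcd m (d ^ k - 1)) x' x"
    \<comment> \<open>\<open>m Z[1/d] + (d^k - 1) Z[1/d] = gcd m (d^k - 1) Z[1/d]\<close>\<close>
    by (simp add: zcong_gcd_iff orbit_cong_def)
  finally show ?thesis .
qed

end

section \<open>Classification of the subgroups of finite index\<close>

locale finite_index_subgroup = baumslag_solitar +
  fixes H :: "(rat \<times> int) set"
  assumes subgroup_H: "subgroup H Aff" and finite_index_H: "finite (rcosets\<^bsub>Aff\<^esub> H)"
begin

lemma mem_H_Zd: "(y, l) \<in> H \<Longrightarrow> y \<in> Zd"
  using subgroup.subset[OF subgroup_H] by auto

lemma H_mult: "a \<in> H \<Longrightarrow> b \<in> H \<Longrightarrow> a \<otimes>\<^bsub>Aff\<^esub> b \<in> H"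
  using subgroup.m_closed[OF subgroup_H] .

lemma H_inv: "a \<in> H \<Longrightarrow> inv\<^bsub>Aff\<^esub> a \<in> H"
  using subgroup.m_inv_closed[OF subgroup_H] .

lemma H_int_pow: "a \<in> H \<Longrightarrow> a [^]\<^bsub>Aff\<^esub> (q::int) \<in> H"
  using Aff.subgroup_int_pow_closed[OF subgroup_H] .

lemma generator_power_in_H:
  assumes "g \<in> carrier Aff"
  obtains j :: nat where "j \<ge> 1" and "g [^]\<^bsub>Aff\<^esub> int j \<in> H"
proof -
  obtain j :: nat where "j \<ge> 1" "g [^]\<^bsub>Aff\<^esub> j \<in> H"
    using Aff.pow_in_finite_index_subgroup[OF subgroup_H finite_index_H assms] by blast
  then show ?thesis
    using that[of j] by (simp add: int_pow_int)
qed

definition level :: nat where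
  "level = (LEAST k. 0 < k \<and> (\<exists>y. (y, int k) \<in> H))"

definition level_coord :: rat where
  "level_coord = (SOME y. (y, int level) \<in> H)"

definition modulus :: nat where
  "modulus = (LEAST m. 0 < m \<and> (of_nat m, 0) \<in> H)"

lemma level_ge_1: "level \<ge> 1" and level_mem: "(level_coord, int level) \<in> H"
  and level_minimal: "0 < k \<Longrightarrow> k < level \<Longrightarrow> (y, int k) \<notin> H"
proof -
  obtain j :: nat where "j \<ge> 1" "(0, 1) [^]\<^bsub>Aff\<^esub> int j \<in> H"
    by (rule generator_power_in_H) auto
  then have "0 < j \<and> (\<exists>y. (y, int j) \<in> H)"
    by (auto simp: Aff_pow_generators)
  then have "0 < level \<and> (\<exists>y. (y, int level) \<in> H)"
    unfolding level_def by (rule LeastI)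
  then show "level \<ge> 1" and "(level_coord, int level) \<in> H"
    unfolding level_coord_def by (auto intro: someI_ex)
  show "0 < k \<Longrightarrow> k < level \<Longrightarrow> (y, int k) \<notin> H"
    unfolding level_def using not_less_Least by blast
qed

lemma modulus_ge_1: "modulus \<ge> 1" and modulus_mem: "(of_nat modulus, 0) \<in> H"
  and modulus_minimal: "0 < m \<Longrightarrow> m < modulus \<Longrightarrow> (of_nat m, 0) \<notin> H"
proof -
  obtain j :: nat where "j \<ge> 1" "(1, 0) [^]\<^bsub>Aff\<^esub> int j \<in> H"
    by (rule generator_power_in_H) auto
  then have "0 < j \<and> (of_nat j, 0) \<in> H"
    by (auto simp: Aff_pow_generators)
  then have "0 < modulus \<and> (of_nat modulus, 0) \<in> H"
    unfolding modulus_def by (rule LeastI)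
  then show "modulus \<ge> 1" "(of_nat modulus, 0) \<in> H"
    by auto
  show "0 < m \<Longrightarrow> m < modulus \<Longrightarrow> (of_nat m, 0) \<notin> H"
    unfolding modulus_def using not_less_Least by blast
qed

lemma level_coord_in_Zd: "level_coord \<in> Zd"
  using mem_H_Zd level_mem .

lemma level_powers_in_H: "(geom level level_coord (int level * q), int level * q) \<in> H"
  using H_int_pow[OF level_mem, of q] Aff_int_pow[OF level_ge_1 level_coord_in_Zd] by simp

lemma level_dvd:
  assumes "(y, l) \<in> H"
  shows "int level dvd l"
proof (rule ccontr)
  assume "\<not> int level dvd l"
  then have r: "0 < l mod int level" "l mod int level < int level"
    using level_ge_1 by (auto simp: dvd_eq_mod_eq_0 order_le_neq_trans)
  define c where "c = geom level level_coord (int level * (l div int level))"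
  have "c \<in> Zd"
    unfolding c_def using geom_in_Zd level_ge_1 level_coord_in_Zd by simp
  have "(y, l) \<otimes>\<^bsub>Aff\<^esub> inv\<^bsub>Aff\<^esub> (c, int level * (l div int level)) \<in> H"
    using H_mult[OF assms H_inv[OF level_powers_in_H]] unfolding c_def .
  then have "(y - D powi (l mod int level) * c, int (nat (l mod int level))) \<in> H"
    using r by (simp only: Aff_mult_inv[OF \<open>c \<in> Zd\<close>] minus_mult_div_eq_mod) simp
  then show False
    using level_minimal[of "nat (l mod int level)"] r by auto
qed

lemma conj_level_power_mem:
  assumes "(y, 0) \<in> H"
  shows "(D powi (int level * q) * y, 0) \<in> H"
proof -
  let ?g = "(geom level level_coord (int level * q), int level * q)"
  have "geom level level_coord (int level * q) \<in> Zd"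
    using geom_in_Zd level_ge_1 level_coord_in_Zd by simp
  then have "?g \<otimes>\<^bsub>Aff\<^esub> (y, 0) \<otimes>\<^bsub>Aff\<^esub> inv\<^bsub>Aff\<^esub> ?g = (D powi (int level * q) * y, 0)"
    using Aff_conj[of _ "int level * q" y 0] by simp
  then show ?thesis
    using H_mult[OF H_mult[OF level_powers_in_H[of q] assms] H_inv[OF level_powers_in_H[of q]]] by simp
qed

lemma modulus_multiple_mem:
  assumes "w \<in> Zd"
  shows "(of_nat modulus * w, 0) \<in> H"
proof -
  obtain q p where w: "w = of_int q / D ^ p"
    using assms unfolding Zd_def by blast
  define e where "e = (level - 1) * p"
  have "int level * - int p + int e = - int p"
    using level_ge_1 by (simp add: e_def of_nat_diff algebra_simps)
  then have "D powi (int level * - int p) * D ^ e = D powi (- int p)"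
    by (metis D_powi_add power_int_of_nat)
  then have "D powi (int level * - int p) * (of_int (q * int d ^ e) * of_nat modulus) = of_nat modulus * w"
    by (simp add: w power_int_minus field_simps)
  moreover have "(of_int (q * int d ^ e) * of_nat modulus, 0) \<in> H"
    using H_int_pow[OF modulus_mem, of "q * int d ^ e"] by (simp add: Aff_int_pow_level_zero)
  ultimately show ?thesis
    using conj_level_power_mem[of _ "- int p"] by metis
qed

lemma modulus_dvd_int_mem:
  assumes "(of_int z, 0) \<in> H"
  shows "int modulus dvd z"
proof (rule ccontr)
  assume "\<not> int modulus dvd z"
  then have "z mod int modulus \<noteq> 0"
    by (simp add: dvd_eq_mod_eq_0)
  moreover have "0 \<le> z mod int modulus" "z mod int modulus < int modulus"
    using modulus_ge_1 by simp_all
  ultimately have r: "0 < z mod int modulus" "z mod int modulus < int modulus"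
    by simp_all
  have "(of_int z, 0) \<otimes>\<^bsub>Aff\<^esub> inv\<^bsub>Aff\<^esub> (of_int (z div int modulus) * of_nat modulus, 0) \<in> H"
    using H_mult[OF assms H_inv[OF H_int_pow[OF modulus_mem]]] by (simp add: Aff_int_pow_level_zero)
  moreover have "of_int z - of_int (z div int modulus) * of_nat modulus = (of_int (z mod int modulus) :: rat)"
    using arg_cong[OF minus_div_mult_eq_mod[of z "int modulus"], of "of_int :: int \<Rightarrow> rat"] by simp
  ultimately have "(of_nat (nat (z mod int modulus)), 0) \<in> H"
    using r by (simp add: Aff_mult_inv Zd_mult)
  moreover have "0 < nat (z mod int modulus)" and "nat (z mod int modulus) < modulus"
    using r by (simp_all add: nat_less_iff)
  ultimately show False
    using modulus_minimal[of "nat (z mod int modulus)"] by blast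
qed

lemma coprime_modulus: "coprime modulus d"
proof (rule ccontr)
  assume "\<not> coprime modulus d"
  define g where "g = gcd modulus d"
  have "g \<noteq> 1" "g \<noteq> 0"
    using \<open>\<not> coprime modulus d\<close> modulus_ge_1 by (auto simp: g_def coprime_iff_gcd_eq_1)
  then have "g > 1"
    by linarith
  obtain m' where m': "modulus = g * m'"
    unfolding g_def by (rule dvdE[OF gcd_dvd1])
  obtain d' where d': "d = g * d'"
    unfolding g_def by (rule dvdE[OF gcd_dvd2])
  have "d' \<noteq> 0" "m' \<noteq> 0"
    using d' m' d_nonzero modulus_ge_1 by (metis mult_0_right, metis mult_0_right not_one_le_zero)
  then have "of_nat modulus * (of_int (int d') / D ^ 1) = (of_nat m' :: rat)"
    using \<open>g \<noteq> 0\<close> by (simp add: m' d')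
  moreover have "of_int (int d') / D ^ 1 \<in> Zd"
    unfolding Zd_def by blast
  ultimately have "(of_nat m', 0) \<in> H"
    using modulus_multiple_mem by metis
  moreover have "0 < m'" "m' < modulus"
    using \<open>m' \<noteq> 0\<close> \<open>g > 1\<close> m' by simp_all
  ultimately show False
    using modulus_minimal[of m'] by blast
qed

lemma level_zero_mem_iff:
  assumes "y \<in> Zd"
  shows "(y, 0) \<in> H \<longleftrightarrow> zcong modulus y 0"
proof
  assume "zcong modulus y 0"
  then show "(y, 0) \<in> H"
    using modulus_multiple_mem by (auto elim: zcongE)
next
  assume "(y, 0) \<in> H"
  obtain q p where y: "y = of_int q / D ^ p"
    using assms unfolding Zd_def by blast
  define e where "e = level * p - p"
  have "level * p = e + p"
    using level_ge_1 by (simp add: e_def)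
  have "D powi (int level * int p) = D ^ (level * p)"
    by (metis of_nat_mult power_int_of_nat)
  also have "\<dots> = D ^ e * D ^ p"
    by (simp add: \<open>level * p = e + p\<close> power_add)
  finally have "D powi (int level * int p) * y = of_int (q * int d ^ e)"
    by (simp add: y)
  then have "int modulus dvd q * int d ^ e"
    using conj_level_power_mem[OF \<open>(y, 0) \<in> H\<close>, of "int p"] modulus_dvd_int_mem by simp
  moreover have "coprime (int modulus) (int d ^ e)"
    using coprime_modulus by simp
  ultimately obtain t where "q = int modulus * t"
    using coprime_dvd_mult_left_iff by blast
  then show "zcong modulus y 0"
    by (intro zcongI[of "of_int t / D ^ p"]) (auto simp: y Zd_def)
qed

lemma mem_H_iff_level_zero:
  assumes "y \<in> Zd" and l: "l = int level * q"
  shows "(y, l) \<in> H \<longleftrightarrow> (y - geom level level_coord l, 0) \<in> H"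
proof -
  let ?c = "geom level level_coord l"
  have "?c \<in> Zd" and g: "(?c, l) \<in> H"
    using geom_in_Zd level_ge_1 level_coord_in_Zd level_powers_in_H l by simp_all
  have "(y, l) \<otimes>\<^bsub>Aff\<^esub> inv\<^bsub>Aff\<^esub> (?c, l) = (y - ?c, 0)"
    using Aff_mult_inv[OF \<open>?c \<in> Zd\<close>, of y l l] by simp
  moreover have "(y - ?c, 0) \<otimes>\<^bsub>Aff\<^esub> (?c, l) = (y, l)"
    by simp
  ultimately show ?thesis
    using H_mult[OF _ H_inv[OF g]] H_mult[OF _ g] by metis
qed

lemma H_eq_std_subgroup: "H = std_subgroup level modulus level_coord"
proof -
  have "(y, l) \<in> H \<longleftrightarrow> (y, l) \<in> std_subgroup level modulus level_coord" for y l
  proof -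
    have "(y, l) \<in> H \<longleftrightarrow> y \<in> Zd \<and> int level dvd l \<and> (y - geom level level_coord l, 0) \<in> H"
      using mem_H_Zd level_dvd mem_H_iff_level_zero by blast
    also have "\<dots> \<longleftrightarrow> (y, l) \<in> std_subgroup level modulus level_coord"
      using level_zero_mem_iff geom_in_Zd[OF level_ge_1 level_coord_in_Zd]
      by (auto simp: mem_std_subgroup zcong_iff_diff[of _ y] Zd_diff)
    finally show ?thesis .
  qed
  then show ?thesis
    by auto
qed
end

context baumslag_solitar
begin

lemma finite_index_subgroup_std:
  assumes "subgroup H Aff" and "finite (rcosets\<^bsub>Aff\<^esub> H)"
  obtains k m x where "k \<ge> 1" "m \<ge> 1" "coprime m d" "x < m" "H = std_subgroup k m (of_nat x)"
proof -
  interpret finite_index_subgroup d H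
    using baumslag_solitar_axioms assms
    by (simp add: finite_index_subgroup_def finite_index_subgroup_axioms_def)
  obtain x where "x < modulus" "zcong modulus level_coord (of_nat x)"
    using zcong_nat_representative[OF level_coord_in_Zd coprime_modulus] modulus_ge_1 by auto
  then show ?thesis
    using that level_ge_1 modulus_ge_1 coprime_modulus H_eq_std_subgroup std_subgroup_cong by metis
qed

end

section \<open>Counting conjugacy classes\<close>

lemma S_degree_dvd_iff:
  fixes d m i n :: nat
  assumes "0 < d" and "0 < m"
  shows "S_degree d (m, i) dvd n \<longleftrightarrow> m dvd n \<and> m div gcd m (d ^ (n div m) - 1) dvd i"
proof -
  define k where "k = n div m"
  define a where "a = gcd m i"
  define b where "b = gcd m (d ^ k - 1)"
  have "a \<noteq> 0" "b \<noteq> 0" "a dvd m" "b dvd m"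
    using assms(2) by (simp_all add: a_def b_def)
  have "S_degree d (m, i) dvd n \<longleftrightarrow> m dvd n \<and> ord (m div a) d dvd k"
    using assms(2) by (auto simp: S_degree_def a_def k_def elim!: dvdE dvd_mult_left)
  also have "ord (m div a) d dvd k \<longleftrightarrow> m div a dvd d ^ k - 1"
    using assms(1) by (simp add: ord_divides[symmetric] cong_altdef_nat)
  also have "\<dots> \<longleftrightarrow> m div a dvd b"
    using \<open>a dvd m\<close> by (auto simp: b_def intro: dvd_trans[OF _ gcd_dvd2] dvd_div_mult_self)
  also have "\<dots> \<longleftrightarrow> m div b dvd a"
    using \<open>a \<noteq> 0\<close> \<open>b \<noteq> 0\<close> \<open>a dvd m\<close> \<open>b dvd m\<close> by (simp add: div_dvd_iff_mult mult.commute)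
  also have "\<dots> \<longleftrightarrow> m div b dvd i"
    using \<open>b dvd m\<close> by (auto simp: a_def intro: dvd_trans[OF _ gcd_dvd2])
  finally show ?thesis
    by (simp add: k_def b_def)
qed

context baumslag_solitar
begin

lemma S_rel_iff:
  "((m, i), (m', i')) \<in> S_rel d \<longleftrightarrow>
     (m, i) \<in> S_set d \<and> (m', i') \<in> S_set d \<and> m = m' \<and> orbit_cong m (of_nat i) (of_nat i')"
  using orbit_cong_of_nat_iff by (auto simp: S_rel_def S_set_def coprime_iff_gcd_eq_1)

lemma S_rel_equiv: "equiv (S_set d) (S_rel d)"
proof (rule equivI)
  show "refl_on (S_set d) (S_rel d)"
    by (auto intro!: refl_onI simp: S_rel_iff orbit_cong_refl)
  show "sym (S_rel d)"
    by (auto intro!: symI simp: S_rel_iff orbit_cong_sym)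
  show "trans (S_rel d)"
    by (auto intro!: transI simp: S_rel_iff intro: orbit_cong_trans)
qed (auto simp: S_rel_def)

lemma S_degree_S_rel:
  assumes "((m, i), (m', i')) \<in> S_rel d"
  shows "S_degree d (m, i) = S_degree d (m', i')"
proof -
  obtain j where "m = m'" and "coprime m d" and j: "[i = i' * d ^ j] (mod m) \<or> [i' = i * d ^ j] (mod m)"
    using assms by (auto simp: S_rel_def S_set_def coprime_iff_gcd_eq_1)
  have "coprime m (d ^ j)"
    using \<open>coprime m d\<close> by simp
  then have "gcd m (i * d ^ j) = gcd m i" "gcd m (i' * d ^ j) = gcd m i'"
    by (simp_all add: gcd_mult_right_right_cancel)
  then have "gcd m i = gcd m i'"
    using j by (metis cong_gcd_eq gcd.commute)
  then show ?thesis
    by (simp add: S_degree_def \<open>m = m'\<close>)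
qed

lemma class_degree_quotient:
  "{C \<in> S_set d // S_rel d. class_degree d C dvd n} = {p \<in> S_set d. S_degree d p dvd n} // S_rel d"
proof -
  have "class_degree d (S_rel d `` {p}) = S_degree d p" if "p \<in> S_set d" for p
  proof -
    have "(p, SOME q. q \<in> S_rel d `` {p}) \<in> S_rel d"
      using someI[of "\<lambda>q. q \<in> S_rel d `` {p}" p] equiv_class_self[OF S_rel_equiv that] by simp
    then show ?thesis
      unfolding class_degree_def using S_degree_S_rel by (metis surj_pair)
  qed
  then show ?thesis
    unfolding quotient_def by auto
qed

text \<open>If \<open>S_degree d (m, i)\<close> divides \<open>n\<close>, then \<open>i\<close> is a multiple of \<open>m / g\<close>, where
  \<open>g = gcd m (d^(n/m) - 1)\<close>, and \<open>i / (m / g)\<close> is the residue modulo \<open>g\<close> that determines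
  the conjugacy class of the subgroup.\<close>

definition S_subgroup :: "nat \<Rightarrow> nat \<times> nat \<Rightarrow> (rat \<times> int) set" where
  "S_subgroup n p = (case p of (m, i) \<Rightarrow>
     std_subgroup (n div m) m (of_nat (i div (m div gcd m (d ^ (n div m) - 1)))))"

lemma S_subgroup_params:
  assumes "(m, i) \<in> S_set d" and "S_degree d (m, i) dvd n" and "n \<ge> 1"
  defines "g \<equiv> gcd m (d ^ (n div m) - 1)"
  shows "n div m \<ge> 1" and "n = n div m * m" and "coprime m d" and "m \<ge> 1"
    and "m div g * g = m" and "i = m div g * (i div (m div g))"
    and "S_subgroup n (m, i) = std_subgroup (n div m) m (of_nat (i div (m div g)))"
proof -
  show "m \<ge> 1" "coprime m d"
    using assms(1) by (auto simp: S_set_def coprime_iff_gcd_eq_1)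
  then have "m dvd n" and "m div g dvd i"
    using assms(2) S_degree_dvd_iff[of d m i n] d_gt_1 by (simp_all add: g_def)
  then show "n div m \<ge> 1" "n = n div m * m"
    using assms(3) \<open>m \<ge> 1\<close> by (auto elim!: dvdE)
  show "m div g * g = m"
    by (simp add: g_def)
  show "i = m div g * (i div (m div g))"
    using \<open>m div g dvd i\<close> by simp
  show "S_subgroup n (m, i) = std_subgroup (n div m) m (of_nat (i div (m div g)))"
    by (simp add: S_subgroup_def g_def)
qed

lemma S_subgroup_of_index:
  assumes "p \<in> S_set d" and "S_degree d p dvd n" and "n \<ge> 1"
  shows "S_subgroup n p \<in> subgroups_of_index Aff n"
proof -
  obtain m i where p: "p = (m, i)"
    by (cases p)
  note params = S_subgroup_params[OF assms[unfolded p]]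
  show ?thesis
    using std_subgroup_subgroup[OF params(1)] std_subgroup_index[OF params(1,4,3)] params(2,7)
    by (simp add: p subgroups_of_index_def)
qed

lemma S_subgroup_conj_iff:
  assumes "p \<in> S_set d" and "S_degree d p dvd n" and "p' \<in> S_set d" and "S_degree d p' dvd n"
    and "n \<ge> 1"
  shows "(S_subgroup n p, S_subgroup n p') \<in> subgroup_conj Aff \<longleftrightarrow> (p, p') \<in> S_rel d"
proof -
  obtain m i m' i' where p: "p = (m, i)" and p': "p' = (m', i')"
    by (cases p, cases p')
  note params = S_subgroup_params[OF assms(1-2)[unfolded p] assms(5)]
  note params' = S_subgroup_params[OF assms(3-4)[unfolded p'] assms(5)]
  let ?g = "gcd m (d ^ (n div m) - 1)"
  let ?q = "m div ?g"
  have "(S_subgroup n p, S_subgroup n p') \<in> subgroup_conj Aff \<longleftrightarrow>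
      m = m' \<and> orbit_cong ?g (of_nat (i' div ?q)) (of_nat (i div ?q))"
    unfolding p p' params(7) params'(7) std_subgroup_conj_iff[OF params(1) params'(1) params(3) params'(3)
      of_nat_in_Zd of_nat_in_Zd]
    by auto
  also have "\<dots> \<longleftrightarrow> m = m' \<and> orbit_cong m (of_nat i') (of_nat i)"
  proof (intro conj_cong refl)
    assume "m = m'"
    have "?q > 0"
      using params(4,5) by (metis gr0I mult_is_0 not_one_le_zero)
    then have "orbit_cong ?g (of_nat (i' div ?q)) (of_nat (i div ?q)) \<longleftrightarrow>
        orbit_cong (?q * ?g) (of_nat (?q * (i' div ?q))) (of_nat (?q * (i div ?q)))"
      by (simp only: of_nat_mult orbit_cong_mult_modulus_iff)
    also have "\<dots> \<longleftrightarrow> orbit_cong m (of_nat i') (of_nat i)"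
    proof -
      have "i' = ?q * (i' div ?q)"
        unfolding \<open>m = m'\<close> by (rule params'(6))
      then show ?thesis
        by (simp only: params(5) params(6)[symmetric])
    qed
    finally show "orbit_cong ?g (of_nat (i' div ?q)) (of_nat (i div ?q)) \<longleftrightarrow> orbit_cong m (of_nat i') (of_nat i)" .
  qed
  also have "\<dots> \<longleftrightarrow> (p, p') \<in> S_rel d"
    using assms(1,3) orbit_cong_sym by (auto simp: p p' S_rel_iff)
  finally show ?thesis .
qed

lemma S_subgroup_representative:
  fixes x :: nat
  assumes "k \<ge> 1" and "m \<ge> 1" and "coprime m d"
  defines "g \<equiv> gcd m (d ^ k - 1)"
  defines "i \<equiv> m div g * (x mod g)"
  shows "(m, i) \<in> S_set d" and "S_degree d (m, i) dvd k * m"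
    and "S_subgroup (k * m) (m, i) = std_subgroup k m (of_nat (x mod g))"
proof -
  have k: "k * m div m = k" and km: "k * m \<ge> 1"
    using assms(1,2) by simp_all
  have "g > 0" "m div g * g = m"
    using assms(2) by (simp_all add: g_def)
  then have "m div g > 0"
    using assms(2) by (metis gr0I mult_is_0 not_one_le_zero)
  then have "i < m div g * g"
    using \<open>g > 0\<close> by (simp add: i_def)
  then show S: "(m, i) \<in> S_set d"
    using assms(2,3) \<open>m div g * g = m\<close> by (simp add: S_set_def coprime_iff_gcd_eq_1)
  show deg: "S_degree d (m, i) dvd k * m"
    using S_degree_dvd_iff[of d m i "k * m"] d_gt_1 assms(2) k by (simp add: g_def i_def)
  have "S_subgroup (k * m) (m, i) = std_subgroup k m (of_nat (i div (m div g)))"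
    using S_subgroup_params(7)[OF S deg km] by (simp only: k g_def)
  also have "i div (m div g) = x mod g"
    using \<open>m div g > 0\<close> by (simp add: i_def)
  finally show "S_subgroup (k * m) (m, i) = std_subgroup k m (of_nat (x mod g))" .
qed

lemma subgroup_of_index_conj_S_subgroup:
  assumes "H \<in> subgroups_of_index Aff n" and "n \<ge> 1"
  obtains p where "p \<in> S_set d" and "S_degree d p dvd n" and "(S_subgroup n p, H) \<in> subgroup_conj Aff"
proof -
  obtain k m x where kmx: "k \<ge> 1" "m \<ge> 1" "coprime m d" "x < m" and H: "H = std_subgroup k m (of_nat x)"
    using finite_index_subgroup_std assms(1) unfolding subgroups_of_index_def by blast
  then have n: "n = k * m"
    using std_subgroup_index[OF kmx(1-3)] assms(1) by (simp add: subgroups_of_index_def)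
  define g where "g = gcd m (d ^ k - 1)"
  have "coprime g d"
    unfolding g_def using coprime_divisors[OF gcd_dvd1 dvd_refl kmx(3)] .
  then have "zcong g (of_nat x) (of_nat (x mod g))"
    using zcong_of_nat_iff by (simp add: cong_def)
  then have "orbit_cong g (of_nat x) (of_nat (x mod g))"
    unfolding orbit_cong_def by (intro exI[of _ 0]) simp
  then have "(S_subgroup n (m, m div g * (x mod g)), H) \<in> subgroup_conj Aff"
    using S_subgroup_representative(3)[OF kmx(1-3)] std_subgroup_conj_iff[OF kmx(1) kmx(1) kmx(3) kmx(3)]
    by (simp add: H n g_def)
  moreover have "(m, m div g * (x mod g)) \<in> S_set d" "S_degree d (m, m div g * (x mod g)) dvd n"
    using S_subgroup_representative(1,2)[OF kmx(1-3), of x] by (simp_all add: n g_def)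
  ultimately show ?thesis
    using that by blast
qed

lemma num_conj_classes_index_Aff:
  assumes "n \<ge> 1"
  shows "num_conj_classes_index Aff n = card {C \<in> S_set d // S_rel d. class_degree d C dvd n}"
  unfolding class_degree_quotient num_conj_classes_index_def
proof (rule sym, rule card_quotient_eq[OF S_rel_equiv Aff.subgroup_conj_equiv])
  show "S_subgroup n ` {p \<in> S_set d. S_degree d p dvd n} \<subseteq> subgroups_of_index Aff n"
    using S_subgroup_of_index assms by blast
  show "\<exists>p\<in>{p \<in> S_set d. S_degree d p dvd n}. (S_subgroup n p, H) \<in> subgroup_conj Aff"
    if "H \<in> subgroups_of_index Aff n" for H
    using subgroup_of_index_conj_S_subgroup[OF that assms] by blast
  show "(p, p') \<in> S_rel d \<longleftrightarrow> (S_subgroup n p, S_subgroup n p') \<in> subgroup_conj Aff"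
    if "p \<in> {p \<in> S_set d. S_degree d p dvd n}" "p' \<in> {p \<in> S_set d. S_degree d p dvd n}" for p p'
    using S_subgroup_conj_iff that assms by simp
qed (auto simp: subgroups_of_index_def)

end

section \<open>The presentation\<close>

lemma bs_eq_append_cong: "bs_eq d u v \<Longrightarrow> bs_eq d (x @ u @ y) (x @ v @ y)"
proof (induction rule: bs_eq.induct)
  case (bs_cancel u g s v)
  then show ?case
    using bs_eq.bs_cancel[of d "x @ u" g s "v @ y"] by simp
next
  case (bs_rel u v)
  then show ?case
    using bs_eq.bs_rel[of d "x @ u" "v @ y"] by simp
next
  case (bs_trans u v w)
  then show ?case
    by (blast intro: bs_eq.bs_trans)
qed (auto intro: bs_eq.bs_refl bs_eq.bs_sym)

definition bs_class :: "nat \<Rightarrow> letter list \<Rightarrow> letter list set" where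
  "bs_class d w = {v. bs_eq d w v}"

lemma bs_class_eq_iff: "bs_class d u = bs_class d v \<longleftrightarrow> bs_eq d u v"
proof
  assume "bs_class d u = bs_class d v"
  then show "bs_eq d u v"
    using bs_refl[of d v] unfolding bs_class_def by blast
next
  assume "bs_eq d u v"
  then show "bs_class d u = bs_class d v"
    unfolding bs_class_def using bs_sym bs_trans by blast
qed

lemma BS_carrier: "carrier (BS d) = range (bs_class d)"
  unfolding BS_def bs_class_def by auto

lemma bs_class_in_carrier [simp]: "bs_class d w \<in> carrier (BS d)"
  unfolding BS_carrier by simp

lemma BS_one: "\<one>\<^bsub>BS d\<^esub> = bs_class d []"
  unfolding BS_def bs_class_def by simp

lemma BS_mult: "bs_class d u \<otimes>\<^bsub>BS d\<^esub> bs_class d w = bs_class d (u @ w)"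
proof -
  have "bs_eq d (u @ w) v"
    if "bs_eq d u x" "bs_eq d w y" "bs_eq d (x @ y) v" for x y v
    using bs_eq_append_cong[OF that(1), of "[]" w] bs_eq_append_cong[OF that(2), of x "[]"] that(3)
    by (auto intro: bs_trans)
  then show ?thesis
    unfolding BS_def bs_class_def by (auto intro: bs_refl)
qed

definition word_inv :: "letter list \<Rightarrow> letter list" where
  "word_inv w = rev (map (\<lambda>(g, s). (g, \<not> s)) w)"

lemma bs_eq_word_inv: "bs_eq d (word_inv w @ w) []"
proof (induction w)
  case (Cons x w)
  obtain g s where "x = (g, s)"
    by (cases x)
  then have "bs_eq d (word_inv (x # w) @ x # w) (word_inv w @ w)"
    using bs_cancel[of d "word_inv w" g "\<not> s" w] by (simp add: word_inv_def)
  then show ?case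
    using Cons.IH by (rule bs_trans)
qed (simp add: word_inv_def bs_refl)

lemma BS_group: "group (BS d)"
proof (rule groupI)
  fix x assume "x \<in> carrier (BS d)"
  then obtain w where "x = bs_class d w"
    unfolding BS_carrier by auto
  then have "bs_class d (word_inv w) \<otimes>\<^bsub>BS d\<^esub> x = \<one>\<^bsub>BS d\<^esub>"
    by (simp add: BS_mult BS_one bs_class_eq_iff bs_eq_word_inv)
  then show "\<exists>y\<in>carrier (BS d). y \<otimes>\<^bsub>BS d\<^esub> x = \<one>\<^bsub>BS d\<^esub>"
    by (metis bs_class_in_carrier)
qed (auto simp: BS_carrier BS_one BS_mult)

interpretation BS: group "BS d" for d
  by (rule BS_group)

definition BS_a :: "nat \<Rightarrow> letter list set" where
  "BS_a d = bs_class d [(GA, False)]"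

definition BS_b :: "nat \<Rightarrow> letter list set" where
  "BS_b d = bs_class d [(GB, False)]"

lemma BS_inv_letter: "inv\<^bsub>BS d\<^esub> bs_class d [(g, False)] = bs_class d [(g, True)]"
proof (rule BS.inv_equality)
  show "bs_class d [(g, True)] \<otimes>\<^bsub>BS d\<^esub> bs_class d [(g, False)] = \<one>\<^bsub>BS d\<^esub>"
    using bs_cancel[of d "[]" g True "[]"] by (simp add: BS_mult BS_one bs_class_eq_iff)
qed simp_all

lemma BS_b_power: "BS_b d [^]\<^bsub>BS d\<^esub> (n::nat) = bs_class d (replicate n (GB, False))"
  by (induction n) (simp_all add: BS_one BS_b_def BS_mult replicate_append_same)

lemma bs_relation_BS: "bs_relation (BS d) (BS_a d) (BS_b d) d"
proof (unfold_locales)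
  have "BS_a d \<otimes>\<^bsub>BS d\<^esub> BS_b d \<otimes>\<^bsub>BS d\<^esub> inv\<^bsub>BS d\<^esub> BS_a d
      = bs_class d [(GA, False), (GB, False), (GA, True)]"
    by (simp add: BS_a_def BS_b_def BS_inv_letter BS_mult)
  also have "\<dots> = BS_b d [^]\<^bsub>BS d\<^esub> d"
    using bs_rel[of d "[]" "[]"] by (simp add: BS_b_power bs_class_eq_iff)
  finally show "BS_a d \<otimes>\<^bsub>BS d\<^esub> BS_b d \<otimes>\<^bsub>BS d\<^esub> inv\<^bsub>BS d\<^esub> BS_a d = BS_b d [^]\<^bsub>BS d\<^esub> d" .
qed (simp_all add: BS_a_def BS_b_def)

interpretation BS: bs_relation "BS d" "BS_a d" "BS_b d" d for d
  by (rule bs_relation_BS)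

lemma BS_normal_form_exists:
  assumes "X \<in> carrier (BS d)"
  obtains p q s where "X = BS.normal_form d p q s"
proof -
  obtain w where "X = bs_class d w"
    using assms unfolding BS_carrier by auto
  moreover have "\<exists>p q s. bs_class d w = BS.normal_form d p q s"
  proof (induction w)
    case Nil
    have "BS.normal_form d 0 0 0 = bs_class d []"
      by (simp add: BS.normal_form_def BS_one)
    then show ?case
      by metis
  next
    case (Cons x w)
    then obtain p q s where w: "bs_class d w = BS.normal_form d p q s"
      by blast
    obtain g t where x: "x = (g, t)"
      by (cases x)
    have "bs_class d (x # w) = bs_class d [x] \<otimes>\<^bsub>BS d\<^esub> BS.normal_form d p q s"
      using BS_mult[of d "[x]" w] w by simp
    moreover have "bs_class d [x] \<in> {BS_a d, inv\<^bsub>BS d\<^esub> BS_a d, BS_b d [^]\<^bsub>BS d\<^esub> (1::int),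
        BS_b d [^]\<^bsub>BS d\<^esub> (- 1::int)}"
      using x BS_inv_letter[of d GA] BS_inv_letter[of d GB]
      by (cases g; cases t) (simp_all add: BS_a_def BS_b_def BS.int_pow_neg)
    ultimately show ?case
      using BS.a_mult_normal_form[of d p q s] BS.inv_a_mult_normal_form[of d p q s]
        BS.b_power_mult_normal_form[of d 1 p q s] BS.b_power_mult_normal_form[of d "- 1" p q s]
      by (auto split: if_splits; blast)
  qed
  ultimately show ?thesis
    using that by blast
qed

context baumslag_solitar
begin

definition Aff_letter :: "letter \<Rightarrow> rat \<times> int" where
  "Aff_letter x = (case x of (GA, s) \<Rightarrow> (0, if s then - 1 else 1) | (GB, s) \<Rightarrow> (if s then - 1 else 1, 0))"

definition Aff_word :: "letter list \<Rightarrow> rat \<times> int" where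
  "Aff_word w = foldr (\<lambda>x y. Aff_letter x \<otimes>\<^bsub>Aff\<^esub> y) w \<one>\<^bsub>Aff\<^esub>"

lemma Aff_letter_closed: "Aff_letter x \<in> carrier Aff"
proof -
  obtain g s where "x = (g, s)"
    by (cases x)
  then show ?thesis
    by (cases g) (auto simp: Aff_letter_def intro: Zd_uminus)
qed

lemma Aff_word_simps [simp]:
  "Aff_word [] = \<one>\<^bsub>Aff\<^esub>" "Aff_word (x # w) = Aff_letter x \<otimes>\<^bsub>Aff\<^esub> Aff_word w"
  by (simp_all add: Aff_word_def)

lemma Aff_word_closed: "Aff_word w \<in> carrier Aff"
proof (induction w)
  case (Cons x w)
  then show ?case
    using Aff.m_closed[OF Aff_letter_closed Cons.IH] by simp
qed simp

lemma Aff_word_append: "Aff_word (u @ v) = Aff_word u \<otimes>\<^bsub>Aff\<^esub> Aff_word v"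
  by (induction u) (simp_all add: Aff_word_closed Aff_letter_closed Aff.m_assoc del: Aff_carrier Aff_mult Aff_one)

lemma Aff_word_bs_eq: "bs_eq d u v \<Longrightarrow> Aff_word u = Aff_word v"
proof (induction rule: bs_eq.induct)
  case (bs_cancel u g s v)
  have "Aff_word [(g, s), (g, \<not> s)] = \<one>\<^bsub>Aff\<^esub>"
    by (cases g) (simp_all add: Aff_letter_def)
  then have "Aff_word ([(g, s), (g, \<not> s)] @ v) = Aff_word v"
    by (simp only: Aff_word_append Aff.l_one[OF Aff_word_closed])
  then show ?case
    by (simp only: Aff_word_append)
next
  case (bs_rel u v)
  have "Aff_word (replicate n (GB, False)) = (of_nat n, 0)" for n
    by (induction n) (simp_all add: Aff_letter_def)
  then have "Aff_word [(GA, False), (GB, False), (GA, True)] = Aff_word (replicate d (GB, False))"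
    by (simp add: Aff_letter_def)
  then show ?case
    by (simp only: Aff_word_append)
qed simp_all

definition Aff_of_BS :: "letter list set \<Rightarrow> rat \<times> int" where
  "Aff_of_BS X = Aff_word (SOME w. w \<in> X)"

lemma Aff_of_BS_class: "Aff_of_BS (bs_class d w) = Aff_word w"
proof -
  have "(SOME v. v \<in> bs_class d w) \<in> bs_class d w"
    by (rule someI[of _ w]) (simp add: bs_class_def bs_refl)
  then show ?thesis
    unfolding Aff_of_BS_def bs_class_def using Aff_word_bs_eq by simp
qed

lemma Aff_of_BS_hom: "Aff_of_BS \<in> hom (BS d) Aff"
  by (rule homI) (auto simp: BS_carrier BS_mult Aff_of_BS_class Aff_word_append Aff_word_closed
      simp del: Aff_carrier Aff_mult)

lemma Aff_of_BS_normal_form: "Aff_of_BS (BS.normal_form d p q s) = (of_int q / D ^ p, s - int p)"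
proof -
  interpret group_hom "BS d" Aff Aff_of_BS
    by (simp add: group_hom_def group_hom_axioms_def BS_group Aff_group Aff_of_BS_hom)
  have "Aff_of_BS (BS_a d) = (0, 1)" "Aff_of_BS (BS_b d) = (1, 0)"
    by (simp_all add: BS_a_def BS_b_def Aff_of_BS_class Aff_letter_def)
  then have "Aff_of_BS (BS.normal_form d p q s)
      = inv\<^bsub>Aff\<^esub> ((0, 1) [^]\<^bsub>Aff\<^esub> int p) \<otimes>\<^bsub>Aff\<^esub> (1, 0) [^]\<^bsub>Aff\<^esub> q \<otimes>\<^bsub>Aff\<^esub> (0, 1) [^]\<^bsub>Aff\<^esub> s"
    by (simp add: BS.normal_form_def hom_int_pow int_pow_int[symmetric] del: Aff_carrier Aff_mult Aff_inv)
  then show ?thesis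
    by (simp add: Aff_pow_generators power_int_minus field_simps)
qed

lemma Aff_of_BS_iso: "Aff_of_BS \<in> iso (BS d) Aff"
proof -
  have "inj_on Aff_of_BS (carrier (BS d))"
  proof (rule inj_onI)
    fix X Y assume "X \<in> carrier (BS d)" "Y \<in> carrier (BS d)" and eq: "Aff_of_BS X = Aff_of_BS Y"
    obtain p q s p' q' s' where "X = BS.normal_form d p q s" "Y = BS.normal_form d p' q' s'"
      using BS_normal_form_exists \<open>X \<in> carrier (BS d)\<close> \<open>Y \<in> carrier (BS d)\<close> by metis
    then have X: "X = BS.normal_form d (p + p') (int d ^ p' * q) (s + int p')"
      and Y: "Y = BS.normal_form d (p + p') (int d ^ p * q') (s' + int p)"
      using BS.normal_form_lift[of d p q s p'] BS.normal_form_lift[of d p' q' s' p] by (simp_all add: add.commute)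
    have "int d ^ p' * q = int d ^ p * q'" and "s + int p' = s' + int p"
      using eq unfolding X Y Aff_of_BS_normal_form by (simp_all add: divide_cancel_right)
        (metis of_int_eq_iff of_int_mult of_int_of_nat_eq of_int_power)
    then show "X = Y"
      unfolding X Y by simp
  qed
  moreover have "Aff_of_BS ` carrier (BS d) = carrier Aff"
  proof
    show "Aff_of_BS ` carrier (BS d) \<subseteq> carrier Aff"
      using hom_carrier[OF Aff_of_BS_hom] .
    show "carrier Aff \<subseteq> Aff_of_BS ` carrier (BS d)"
    proof
      fix z assume "z \<in> carrier Aff"
      then obtain q p l where z: "z = (of_int q / D ^ p, l)"
        unfolding Aff_carrier Zd_def by blast
      then have "Aff_of_BS (BS.normal_form d p q (l + int p)) = z"
        by (simp add: Aff_of_BS_normal_form)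
      then show "z \<in> Aff_of_BS ` carrier (BS d)"
        by (metis BS.normal_form_closed image_eqI)
    qed
  qed
  ultimately show ?thesis
    using Aff_of_BS_hom by (simp add: iso_def bij_betw_def)
qed

end

theorem proposition9p9:
  fixes d n :: nat
  assumes "d > 1" and "n \<ge> 1"
  shows "num_conj_classes_index (BS d) n =
         card {C \<in> S_set d // S_rel d. class_degree d C dvd n}"
proof -
  interpret baumslag_solitar d
    using assms(1) by unfold_locales
  have "num_conj_classes_index (BS d) n = num_conj_classes_index Aff n"
    by (rule num_conj_classes_index_iso[OF BS_group Aff_group Aff_of_BS_iso])
  also have "\<dots> = card {C \<in> S_set d // S_rel d. class_degree d C dvd n}"
    by (rule num_conj_classes_index_Aff[OF assms(2)])
  finally show ?thesis .
qed

end
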